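(* Consider the networked feedback system described in the context and suppose it is mean-square input-output stable. Then $$\sum_{k=0}^{\infty}\hat{\mathcal S}(k)=\frac{1}{1-\|\Phi(z)G(z)\|_2^2}\quad\text{and}\quad \|\Phi(z)G(z)\|_2<1.$$
   Context: Setting: $P$ is a SISO discrete-time LTI plant, strictly proper (relative degree $\ge1$), $K$ a proper SISO LTI controller. Let $\tau\ge0$ be an integer, $\mathcal D=\{0,\dots,\tau\}$, $\{\tau_n\}$ i.i.d. with values in $\mathcal D$, $\Pr\{\tau_n=i\}=p_i$, $\sum_ip_i=1$. With real weights $\alpha_i$ and Kronecker delta $\delta$, the channel maps $u$ to $u_d(k)=\sum_{i=0}^{\tau}\alpha_i\delta(\tau_{k-i}-i)u(k-i)$. Closed loop: plant input $v-u_d$, plant output $y$, $u=Ky$; signals real, system at rest at $k=0$. Mean channel $H(z)=\sum_{i=0}^\tau\alpha_ip_iz^{-i}$. Let $\omega(k,n)=\alpha_{k-n}[\delta(\tau_n-(k-n))-p_{k-n}]$ for $n\le k\le n+\tau$, $0$ otherwise, and $d(k)=\sum_{i=0}^\tau\omega(k,k-i)u(k-i)$. Nominal system $G(z)=P(z)K(z)[1+P(z)K(z)H(z)]^{-1}$ with impulse response $g$ ($g(j)=0$ for $j\le0$); then $u(k)=\sum_{n=0}^kg(n)[v(k-n)-d(k-n)]$. Input assumption: $\{\tau_n\}$ independent of $\{v(k)\}$, $v$ zero-mean white noise with bounded variances. Mean-square input-output stable: $G$ stable (poles in open unit disc) and for every such $v$, $\mathbb E\{d^2(k)\}$ and $\mathbb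 E\{u^2(k)\}$ are bounded sequences. $\Phi(z)$ is a minimum-phase polynomial in $z^{-1}$ of degree $\tau$ with real coefficients such that $\Phi(z^{-1})\Phi(z)=\frac12\sum_{i_1,i_2=0}^{\tau}(\alpha_{i_1}z^{i_1}-\alpha_{i_2}z^{i_2})(\alpha_{i_1}z^{-i_1}-\alpha_{i_2}z^{-i_2})p_{i_1}p_{i_2}$. $\|F\|_2^2=\frac1{2\pi}\int_{-\pi}^{\pi}|F(e^{j\theta})|^2d\theta$. Define $\hat{\mathcal T}(m)=\frac12\sum_{i_1,i_2=0}^{\tau}[g(m-i_1)\alpha_{i_1}-g(m-i_2)\alpha_{i_2}]^2p_{i_1}p_{i_2}$ for $m\ge0$, $\hat{\mathcal S}(0)=1$ and $\hat{\mathcal S}(m)=\sum_{n=0}^{m-1}\hat{\mathcal S}(n)\hat{\mathcal T}(m-n)$ for $m\ge1$. *)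

theory Defs
  imports "HOL-Analysis.Analysis" "HOL-Probability.Probability"
    "HOL-Computational_Algebra.Polynomial"
begin

definition tf :: "real poly \<Rightarrow> real poly \<Rightarrow> complex \<Rightarrow> complex" where
  "tf num den z = poly (map_poly complex_of_real num) z / poly (map_poly complex_of_real den) z"

definition mean_channel :: "nat \<Rightarrow> (nat \<Rightarrow> real) \<Rightarrow> (nat \<Rightarrow> real) \<Rightarrow> complex \<Rightarrow> complex" where
  "mean_channel tmax \<alpha> p z = (\<Sum>i\<le>tmax. complex_of_real (\<alpha> i * p i) * inverse z ^ i)"

definition nominal :: "(complex \<Rightarrow> complex) \<Rightarrow> (complex \<Rightarrow> complex) \<Rightarrow> (complex \<Rightarrow> complex)
    \<Rightarrow> complex \<Rightarrow> complex" where
  "nominal P K H z = P z * K z / (1 + P z * K z * H z)"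

definition impulse_response :: "(complex \<Rightarrow> complex) \<Rightarrow> (nat \<Rightarrow> real) \<Rightarrow> bool" where
  "impulse_response F g \<longleftrightarrow>
     (\<exists>R. \<forall>z. R < cmod z \<longrightarrow> (\<lambda>j. complex_of_real (g j) * inverse z ^ j) sums F z)"

(* F is a stable rational transfer function: up to finitely many points (removable
   singularities / cancelled factors) it equals a proper rational function N/D whose
   poles all lie in the open unit disc *)
definition stable_tf :: "(complex \<Rightarrow> complex) \<Rightarrow> bool" where
  "stable_tf F \<longleftrightarrow> (\<exists>N D :: complex poly. D \<noteq> 0 \<and> degree N \<le> degree D \<and>
       (\<forall>z. 1 \<le> cmod z \<longrightarrow> poly D z \<noteq> 0) \<and>
       finite {z. F z \<noteq> poly N z / poly D z})"

definition h2norm :: "(complex \<Rightarrow> complex) \<Rightarrow> real" where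
  "h2norm F = sqrt (1 / (2 * pi) * integral {-pi..pi} (\<lambda>\<theta>. (cmod (F (cis \<theta>)))\<^sup>2))"

definition omega :: "nat \<Rightarrow> (nat \<Rightarrow> real) \<Rightarrow> (nat \<Rightarrow> real) \<Rightarrow> (nat \<Rightarrow> nat) \<Rightarrow> nat \<Rightarrow> nat \<Rightarrow> real" where
  "omega tmax \<alpha> p ts k n =
     (if n \<le> k \<and> k \<le> n + tmax
      then \<alpha> (k - n) * ((if ts n = k - n then 1 else 0) - p (k - n)) else 0)"

(* prefix [u(0),...,u(k-1)] of the closed-loop signal
   u(k) = sum_{n=0}^k g(n) [v(k-n) - d(k-n)],  d(j) = sum_{i=0}^tau W(j,j-i) u(j-i),
   with zero initial conditions (signals vanish at negative times) and g(0) = 0 *)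
primrec cl_prefix :: "(nat \<Rightarrow> real) \<Rightarrow> nat \<Rightarrow> (nat \<Rightarrow> nat \<Rightarrow> real) \<Rightarrow> (nat \<Rightarrow> real)
    \<Rightarrow> nat \<Rightarrow> real list" where
  "cl_prefix g tmax W v 0 = []"
| "cl_prefix g tmax W v (Suc k) =
     (let us = cl_prefix g tmax W v k;
          d = (\<lambda>j. \<Sum>i\<le>min j tmax. W j (j - i) * us ! (j - i))
      in us @ [\<Sum>n\<in>{1..k}. g n * (v (k - n) - d (k - n))])"

definition cl_u :: "(nat \<Rightarrow> real) \<Rightarrow> nat \<Rightarrow> (nat \<Rightarrow> nat \<Rightarrow> real) \<Rightarrow> (nat \<Rightarrow> real) \<Rightarrow> nat \<Rightarrow> real" where
  "cl_u g tmax W v k = cl_prefix g tmax W v (Suc k) ! k"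

definition cl_d :: "(nat \<Rightarrow> real) \<Rightarrow> nat \<Rightarrow> (nat \<Rightarrow> nat \<Rightarrow> real) \<Rightarrow> (nat \<Rightarrow> real) \<Rightarrow> nat \<Rightarrow> real" where
  "cl_d g tmax W v k = (\<Sum>i\<le>min k tmax. W k (k - i) * cl_u g tmax W v (k - i))"

(* canonical sample space: a realisation of the delay sequence and of the input sequence;
   every joint law of ({tau_n},{v(k)}) is realisable on this type *)
type_synonym sample = "(nat \<Rightarrow> nat) \<times> (nat \<Rightarrow> real)"

definition admissible :: "sample measure \<Rightarrow> nat \<Rightarrow> (nat \<Rightarrow> real)
    \<Rightarrow> (nat \<Rightarrow> sample \<Rightarrow> nat) \<Rightarrow> (nat \<Rightarrow> sample \<Rightarrow> real) \<Rightarrow> bool" where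
  "admissible M tmax p ts v \<longleftrightarrow>
     prob_space M \<and>
     (\<forall>n. ts n \<in> measurable M (count_space UNIV)) \<and>
     prob_space.indep_vars M (\<lambda>_. count_space UNIV) ts UNIV \<and>
     (\<forall>n. AE x in M. ts n x \<le> tmax) \<and>
     (\<forall>n i. i \<le> tmax \<longrightarrow> measure M {x \<in> space M. ts n x = i} = p i) \<and>
     (\<forall>k. v k \<in> borel_measurable M) \<and>
     prob_space.indep_var M
        (PiM UNIV (\<lambda>_. count_space UNIV)) (\<lambda>x n. ts n x)
        (PiM UNIV (\<lambda>_. borel)) (\<lambda>x k. v k x) \<and>
     (\<forall>k. integrable M (\<lambda>x. (v k x)\<^sup>2)) \<and>
     (\<forall>k. (\<integral>x. v k x \<partial>M) = 0) \<and>
     (\<forall>k l. k \<noteq> l \<longrightarrow> (\<integral>x. v k x * v l x \<partial>M) = 0) \<and>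
     (\<exists>B. \<forall>k. (\<integral>x. (v k x)\<^sup>2 \<partial>M) \<le> B)"

definition ms_stable :: "nat \<Rightarrow> (nat \<Rightarrow> real) \<Rightarrow> (nat \<Rightarrow> real)
    \<Rightarrow> (complex \<Rightarrow> complex) \<Rightarrow> (nat \<Rightarrow> real) \<Rightarrow> bool" where
  "ms_stable tmax \<alpha> p G g \<longleftrightarrow>
     stable_tf G \<and>
     (\<forall>(M :: sample measure) ts v. admissible M tmax p ts v \<longrightarrow>
        (let u = (\<lambda>k x. cl_u g tmax (omega tmax \<alpha> p (\<lambda>n. ts n x)) (\<lambda>k. v k x) k);
             d = (\<lambda>k x. cl_d g tmax (omega tmax \<alpha> p (\<lambda>n. ts n x)) (\<lambda>k. v k x) k)
         in (\<forall>k. integrable M (\<lambda>x. (u k x)\<^sup>2) \<and> integrable M (\<lambda>x. (d k x)\<^sup>2)) \<and>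
            (\<exists>B. \<forall>k. (\<integral>x. (u k x)\<^sup>2 \<partial>M) \<le> B \<and> (\<integral>x. (d k x)\<^sup>2 \<partial>M) \<le> B)))"

definition gz :: "(nat \<Rightarrow> real) \<Rightarrow> int \<Rightarrow> real" where
  "gz g m = (if m < 0 then 0 else g (nat m))"

definition That :: "nat \<Rightarrow> (nat \<Rightarrow> real) \<Rightarrow> (nat \<Rightarrow> real) \<Rightarrow> (nat \<Rightarrow> real) \<Rightarrow> nat \<Rightarrow> real" where
  "That tmax \<alpha> p g m = 1/2 * (\<Sum>i1\<le>tmax. \<Sum>i2\<le>tmax.
      (gz g (int m - int i1) * \<alpha> i1 - gz g (int m - int i2) * \<alpha> i2)\<^sup>2 * p i1 * p i2)"

function Shat :: "nat \<Rightarrow> (nat \<Rightarrow> real) \<Rightarrow> (nat \<Rightarrow> real) \<Rightarrow> (nat \<Rightarrow> real) \<Rightarrow> nat \<Rightarrow> real" where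
  "Shat tmax \<alpha> p g m =
     (if m = 0 then 1 else (\<Sum>n<m. Shat tmax \<alpha> p g n * That tmax \<alpha> p g (m - n)))"
  by pat_completeness auto
termination by (relation "Wellfounded.measure (\<lambda>(_, _, _, _, m). m)") auto

end

theory Submission
  imports Defs "HOL-Complex_Analysis.Complex_Analysis"
begin

text \<open>Drive the loop with i.i.d. delays of law \<open>p\<close> and an independent input of i.i.d. random
  signs \<open>v(k) = \<plusminus>1\<close>. Unrolling the loop gives
  \<open>u(k) = \<Sum>\<^sub>n g(n) v(k-n) - \<Sum>\<^sub>m\<^sub><\<^sub>k X\<^sub>k\<^sub>,\<^sub>m(\<tau>\<^sub>m) u(m)\<close>, where the coefficient \<open>X\<^sub>k\<^sub>,\<^sub>m\<close> has mean
  zero and variance \<open>That(k-m)\<close>, and \<open>u(m)\<close> depends only on \<open>\<tau>\<^sub>j\<close> for \<open>j < m\<close>. All cross terms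
  vanish in \<open>E u(k)\<^sup>2\<close>, which therefore satisfies the renewal equation
  \<open>E u(k)\<^sup>2 = \<Sum>\<^sub>n\<^sub>\<le>\<^sub>k g(n)\<^sup>2 + \<Sum>\<^sub>m\<^sub><\<^sub>k That(k-m) E u(m)\<^sup>2\<close>. Mean-square stability bounds
  \<open>E u(k)\<^sup>2\<close>, which forces the total mass \<open>\<tau> = \<Sum> That\<close> below \<open>1\<close>: otherwise \<open>E u(k)\<^sup>2\<close> grows
  linearly in \<open>k\<close>. Parseval's identity and the defining identity of \<open>\<Phi>\<close> give
  \<open>\<tau> = \<parallel>\<Phi>G\<parallel>\<^sub>2\<^sup>2\<close>, and \<open>Shat\<close>, the renewal sequence of \<open>That\<close>, sums to \<open>1/(1-\<tau>)\<close>.\<close>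

section \<open>Renewal sequences\<close>

lemma renewal_sequence_nonneg:
  fixes S T :: "nat \<Rightarrow> real"
  assumes S0: "S 0 = 1" and S_rec: "\<And>m. 0 < m \<Longrightarrow> S m = (\<Sum>n<m. S n * T (m - n))"
    and T_nonneg: "\<And>m. 0 \<le> T m"
  shows "0 \<le> S m"
proof (induction m rule: less_induct)
  case (less m)
  show ?case
  proof (cases "m = 0")
    case False
    then show ?thesis
      using S_rec[of m] less T_nonneg by (auto intro!: sum_nonneg)
  qed (simp add: S0)
qed

lemma renewal_sequence_conv:
  fixes S T :: "nat \<Rightarrow> real"
  assumes S0: "S 0 = 1" and S_rec: "\<And>m. 0 < m \<Longrightarrow> S m = (\<Sum>n<m. S n * T (m - n))" and T0: "T 0 = 0"
  shows "S m = (if m = 0 then 1 else 0) + (\<Sum>i\<le>m. S i * T (m - i))"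
  using S_rec[of m] by (cases "m = 0") (simp_all add: S0 T0 lessThan_Suc_atMost[symmetric])

lemma renewal_sequence_partial_sum_le:
  fixes S T :: "nat \<Rightarrow> real"
  assumes S0: "S 0 = 1" and S_rec: "\<And>m. 0 < m \<Longrightarrow> S m = (\<Sum>n<m. S n * T (m - n))"
    and T_nonneg: "\<And>m. 0 \<le> T m" and T0: "T 0 = 0" and T_sums: "T sums \<tau>" and \<tau>_less: "\<tau> < 1"
  shows "(\<Sum>m<N. S m) \<le> 1 / (1 - \<tau>)"
proof -
  define s where "s = (\<Sum>m<N. S m)"
  have S_nonneg: "0 \<le> S m" for m
    by (rule renewal_sequence_nonneg[OF S0 S_rec T_nonneg])
  have "(\<Sum>m<N. \<Sum>i\<le>m. S i * T (m - i)) = (\<Sum>(i, j)\<in>{(i, j). i + j < N}. S i * T j)"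
    by (rule sum.triangle_reindex[symmetric])
  also have "\<dots> \<le> (\<Sum>(i, j)\<in>{..<N} \<times> {..<N}. S i * T j)"
    by (rule sum_mono2) (auto simp: S_nonneg T_nonneg)
  also have "\<dots> = s * (\<Sum>j<N. T j)"
    unfolding s_def by (simp add: sum_product sum.cartesian_product)
  also have "\<dots> \<le> s * \<tau>"
    using sum_le_suminf[of T "{..<N}"] T_sums T_nonneg
    by (intro mult_left_mono) (auto simp: s_def sums_iff intro!: sum_nonneg S_nonneg)
  finally have "(\<Sum>m<N. \<Sum>i\<le>m. S i * T (m - i)) \<le> s * \<tau>" .
  moreover have "(\<Sum>m<N. if m = 0 then 1 else 0 :: real) \<le> 1"
    by (cases N) (auto simp: sum.lessThan_Suc_shift)
  moreover have "s = (\<Sum>m<N. if m = 0 then 1 else 0) + (\<Sum>m<N. \<Sum>i\<le>m. S i * T (m - i))"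
    unfolding s_def sum.distrib[symmetric]
    by (intro sum.cong refl renewal_sequence_conv[OF S0 S_rec T0])
  ultimately have "s * (1 - \<tau>) \<le> 1"
    by (simp add: algebra_simps)
  then show ?thesis
    using \<tau>_less by (simp add: s_def field_simps)
qed

lemma renewal_sequence_sums:
  fixes S T :: "nat \<Rightarrow> real"
  assumes S0: "S 0 = 1" and S_rec: "\<And>m. 0 < m \<Longrightarrow> S m = (\<Sum>n<m. S n * T (m - n))"
    and T_nonneg: "\<And>m. 0 \<le> T m" and T0: "T 0 = 0" and T_sums: "T sums \<tau>" and \<tau>_less: "\<tau> < 1"
  shows "S sums (1 / (1 - \<tau>))"
proof -
  have S_nonneg: "0 \<le> S m" for m
    by (rule renewal_sequence_nonneg[OF S0 S_rec T_nonneg])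
  have S_summable: "summable S"
    using renewal_sequence_partial_sum_le[OF assms] by (rule summableI_nonneg_bounded[OF S_nonneg])
  have "(\<lambda>m. \<Sum>i\<le>m. S i * T (m - i)) sums (suminf S * \<tau>)"
    using Cauchy_product_sums[of S T] S_summable T_sums S_nonneg T_nonneg
    by (simp add: sums_iff)
  then have "(\<lambda>m. (if m = 0 then 1 else 0) + (\<Sum>i\<le>m. S i * T (m - i))) sums (1 + suminf S * \<tau>)"
    by (intro sums_add) (use sums_single[of 0 "\<lambda>_. 1::real"] in simp)
  then have "S sums (1 + suminf S * \<tau>)"
    by (simp only: renewal_sequence_conv[OF S0 S_rec T0, symmetric])
  then have "suminf S * (1 - \<tau>) = 1"
    by (simp add: sums_iff algebra_simps)
  then have "suminf S = 1 / (1 - \<tau>)"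
    using \<tau>_less by (simp add: field_simps)
  then show ?thesis
    using summable_sums[OF S_summable] by simp
qed

lemma renewal_window_bound:
  fixes U T G :: "nat \<Rightarrow> real"
  assumes U_rec: "\<And>k. U k = G k + (\<Sum>m<k. T (k - m) * U m)"
    and U_nonneg: "\<And>k. 0 \<le> U k" and T_nonneg: "\<And>m. 0 \<le> T m"
    and G_ge: "\<And>k. n0 \<le> k \<Longrightarrow> \<gamma> \<le> G k" and k: "n0 + J \<le> k"
  shows "\<gamma> + (\<Sum>j\<in>{1..J}. T j * U (k - j)) \<le> U k"
proof -
  have "(\<Sum>j\<in>{1..J}. T j * U (k - j)) = (\<Sum>m\<in>(\<lambda>j. k - j) ` {1..J}. T (k - m) * U m)"
    using k by (subst sum.reindex) (auto simp: inj_on_def intro!: sum.cong)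
  also have "\<dots> \<le> (\<Sum>m<k. T (k - m) * U m)"
    using k by (intro sum_mono2) (auto simp: T_nonneg U_nonneg)
  finally show ?thesis
    using U_rec[of k] G_ge[of k] k by linarith
qed

lemma renewal_linear_growth:
  fixes U T :: "nat \<Rightarrow> real"
  assumes window: "\<And>k. K \<le> k \<Longrightarrow> \<gamma> + (\<Sum>j\<in>{1..J}. T j * U (k - j)) \<le> U k"
    and U_nonneg: "\<And>k. 0 \<le> U k" and T_nonneg: "\<And>m. 0 \<le> T m" and U_le: "\<And>k. U k \<le> B"
    and mass: "1 - \<epsilon> \<le> (\<Sum>j\<in>{1..J}. T j)" and small: "\<epsilon> * B \<le> \<gamma> / 2" and \<gamma>_pos: "0 < \<gamma>"
  shows "K + q * J \<le> k \<Longrightarrow> real q * \<gamma> / 2 \<le> U k"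
proof (induction q arbitrary: k)
  case 0
  then show ?case by (simp add: U_nonneg)
next
  case (Suc q)
  define s where "s = (\<Sum>j\<in>{1..J}. T j)"
  have "s * (real q * \<gamma> / 2) = (\<Sum>j\<in>{1..J}. T j * (real q * \<gamma> / 2))"
    by (simp add: s_def sum_distrib_right)
  also have "\<dots> \<le> (\<Sum>j\<in>{1..J}. T j * U (k - j))"
    using Suc by (intro sum_mono mult_left_mono T_nonneg Suc.IH) auto
  finally have "\<gamma> + s * (real q * \<gamma> / 2) \<le> U k"
    using window[of k] Suc.prems by simp
  moreover have "(1 - s) * (real q * \<gamma> / 2) \<le> \<gamma> / 2"
  proof (cases "s \<le> 1")
    case True
    have "real q * \<gamma> / 2 \<le> B"
      using Suc.IH[of "K + q * J"] U_le[of "K + q * J"] by simp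
    then have "(1 - s) * (real q * \<gamma> / 2) \<le> \<epsilon> * B"
      using True mass \<gamma>_pos by (intro mult_mono) (auto simp: s_def)
    then show ?thesis using small by linarith
  next
    case False
    then have "(1 - s) * (real q * \<gamma> / 2) \<le> 0"
      using \<gamma>_pos by (intro mult_nonpos_nonneg) auto
    then show ?thesis using \<gamma>_pos by linarith
  qed
  ultimately show ?case by (simp add: algebra_simps)
qed

lemma renewal_bounded_imp_mass_less_1:
  fixes U T G :: "nat \<Rightarrow> real"
  assumes U_rec: "\<And>k. U k = G k + (\<Sum>m<k. T (k - m) * U m)"
    and U_nonneg: "\<And>k. 0 \<le> U k" and T_nonneg: "\<And>m. 0 \<le> T m" and T0: "T 0 = 0"
    and G_ge: "\<And>k. n0 \<le> k \<Longrightarrow> \<gamma> \<le> G k" and \<gamma>_pos: "0 < \<gamma>"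
    and T_sums: "T sums \<tau>" and U_le: "\<And>k. U k \<le> B"
  shows "\<tau> < 1"
proof (rule ccontr)
  assume "\<not> \<tau> < 1"
  have B_nonneg: "0 \<le> B" using U_nonneg[of 0] U_le[of 0] by simp
  define \<epsilon> where "\<epsilon> = \<gamma> / (2 * B + 2)"
  have "\<epsilon> * B \<le> \<gamma> / 2"
    using B_nonneg \<gamma>_pos by (simp add: \<epsilon>_def field_simps)
  have "0 < \<epsilon>" using \<gamma>_pos B_nonneg by (simp add: \<epsilon>_def)
  then obtain J0 where J0: "\<And>n. J0 \<le> n \<Longrightarrow> dist (\<Sum>j<n. T j) \<tau> < \<epsilon>"
    using T_sums unfolding sums_def by (metis (no_types) LIMSEQ_iff_nz dist_real_def)
  define J where "J = Suc J0"
  have "(\<Sum>j<Suc J. T j) = (\<Sum>j\<in>{1..J}. T j)"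
    using T0 by (simp add: lessThan_Suc_atMost atMost_atLeast0 sum.atLeast_Suc_atMost)
  then have mass: "1 - \<epsilon> \<le> (\<Sum>j\<in>{1..J}. T j)"
    using J0[of "Suc J"] \<open>\<not> \<tau> < 1\<close> by (simp add: J_def dist_real_def)
  have window: "\<gamma> + (\<Sum>j\<in>{1..J}. T j * U (k - j)) \<le> U k" if "n0 + J \<le> k" for k
    by (rule renewal_window_bound[OF U_rec U_nonneg T_nonneg G_ge that])
  define q where "q = nat \<lceil>2 * B / \<gamma>\<rceil> + 1"
  have "2 * B / \<gamma> < real q"
    unfolding q_def by linarith
  then have "B < real q * \<gamma> / 2"
    using \<gamma>_pos by (simp add: field_simps)
  moreover have "real q * \<gamma> / 2 \<le> U (n0 + J + q * J)"
    by (rule renewal_linear_growth[where K = "n0 + J", OF window U_nonneg T_nonneg U_le mass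
          \<open>\<epsilon> * B \<le> \<gamma> / 2\<close> \<gamma>_pos]) simp_all
  ultimately show False using U_le[of "n0 + J + q * J"] by linarith
qed

section \<open>The closed loop as a random Volterra recursion\<close>

lemma length_cl_prefix [simp]: "length (cl_prefix g tmax W v k) = k"
  by (induction k) (auto simp: Let_def)

lemma nth_cl_prefix: "m < k \<Longrightarrow> cl_prefix g tmax W v k ! m = cl_u g tmax W v m"
proof (induction k)
  case (Suc k)
  then show ?case
    by (cases "m = k") (auto simp: cl_u_def Let_def nth_append)
qed simp

lemma cl_u_rec:
  "cl_u g tmax W v k = (\<Sum>n\<in>{1..k}. g n * (v (k - n) -
      (\<Sum>i\<le>min (k - n) tmax. W (k - n) (k - n - i) * cl_u g tmax W v (k - n - i))))"
  unfolding cl_u_def[of g tmax W v k]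
  by (auto simp: Let_def nth_append nth_cl_prefix intro!: sum.cong)

lemma sum_triangle_delay_reindex:
  fixes F :: "nat \<Rightarrow> nat \<Rightarrow> real"
  shows "(\<Sum>n\<in>{1..k}. \<Sum>i\<le>min (k - n) T. F n i)
       = (\<Sum>m<k. \<Sum>i\<le>T. if m + i < k then F (k - m - i) i else 0)"
proof -
  have "(\<Sum>n\<in>{1..k}. \<Sum>i\<le>min (k - n) T. F n i) = (\<Sum>(n, i)\<in>Sigma {1..k} (\<lambda>n. {..min (k - n) T}). F n i)"
    by (simp add: sum.Sigma)
  also have "\<dots> = (\<Sum>(m, i)\<in>Sigma {..<k} (\<lambda>m. {i. i \<le> T \<and> m + i < k}). F (k - m - i) i)"
    by (rule sum.reindex_bij_witness[where i="\<lambda>(m, i). (k - m - i, i)" and j="\<lambda>(n, i). (k - n - i, i)"])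
      auto
  also have "\<dots> = (\<Sum>m<k. \<Sum>i\<le>T. if m + i < k then F (k - m - i) i else 0)"
    by (simp add: sum.Sigma[symmetric] sum.inter_filter[symmetric] Collect_conj_eq Int_commute
        atMost_def)
  finally show ?thesis .
qed

definition delay_coeff :: "nat \<Rightarrow> (nat \<Rightarrow> real) \<Rightarrow> (nat \<Rightarrow> real) \<Rightarrow> (nat \<Rightarrow> real)
    \<Rightarrow> nat \<Rightarrow> nat \<Rightarrow> nat \<Rightarrow> real" where
  "delay_coeff tmax \<alpha> p g k m t =
     (\<Sum>i\<le>tmax. gz g (int k - int m - int i) * \<alpha> i * ((if t = i then 1 else 0) - p i))"

lemma gz_diff:
  assumes "g 0 = 0"
  shows "gz g (int k - int m - int i) = (if m + i < k then g (k - m - i) else 0)"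
  using assms by (auto simp: gz_def nat_diff_distrib)

lemma cl_u_volterra:
  assumes g0: "g 0 = 0"
  shows "cl_u g tmax (omega tmax \<alpha> p ts) v k = (\<Sum>n\<in>{1..k}. g n * v (k - n))
     - (\<Sum>m<k. delay_coeff tmax \<alpha> p g k m (ts m) * cl_u g tmax (omega tmax \<alpha> p ts) v m)"
proof -
  define W where "W = omega tmax \<alpha> p ts"
  define u where "u = cl_u g tmax W v"
  define F where "F n i = g n * (W (k - n) (k - n - i) * u (k - n - i))" for n i
  have "u k = (\<Sum>n\<in>{1..k}. g n * v (k - n)) - (\<Sum>n\<in>{1..k}. \<Sum>i\<le>min (k - n) tmax. F n i)"
    unfolding u_def F_def
    by (subst cl_u_rec) (simp add: right_diff_distrib sum_subtractf sum_distrib_left)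
  moreover have "(\<Sum>i\<le>tmax. if m + i < k then F (k - m - i) i else 0)
      = delay_coeff tmax \<alpha> p g k m (ts m) * u m" if "m < k" for m
    unfolding delay_coeff_def sum_distrib_right
  proof (rule sum.cong[OF refl])
    fix i assume "i \<in> {..tmax}"
    then have "m + i < k \<Longrightarrow> W (m + i) m = \<alpha> i * ((if ts m = i then 1 else 0) - p i)"
      by (auto simp: W_def omega_def)
    then show "(if m + i < k then F (k - m - i) i else 0)
        = gz g (int k - int m - int i) * \<alpha> i * ((if ts m = i then 1 else 0) - p i) * u m"
      by (auto simp: F_def gz_diff[where g = g, OF g0] Suc_diff_le)
  qed
  ultimately show ?thesis
    unfolding sum_triangle_delay_reindex by (simp add: W_def u_def)
qed

lemma sum_centered_indicator:
  fixes c p :: "nat \<Rightarrow> real"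
  assumes "t \<le> T"
  shows "(\<Sum>i\<le>T. c i * ((if t = i then 1 else 0) - p i)) = c t - (\<Sum>i\<le>T. c i * p i)"
  using assms
  by (simp add: right_diff_distrib sum_subtractf if_distrib[of "\<lambda>x. c _ * x"] sum.delta cong: if_cong)

lemma centered_indicator_mean:
  fixes c p :: "nat \<Rightarrow> real"
  assumes "(\<Sum>i\<le>T. p i) = 1"
  shows "(\<Sum>t\<le>T. p t * (\<Sum>i\<le>T. c i * ((if t = i then 1 else 0) - p i))) = 0"
proof -
  have "(\<Sum>t\<le>T. p t * (\<Sum>i\<le>T. c i * ((if t = i then 1 else 0) - p i)))
      = (\<Sum>t\<le>T. p t * (c t - (\<Sum>i\<le>T. c i * p i)))"
    by (intro sum.cong refl) (simp add: sum_centered_indicator)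
  also have "\<dots> = (\<Sum>t\<le>T. p t * c t) - (\<Sum>t\<le>T. p t) * (\<Sum>i\<le>T. c i * p i)"
    by (simp add: right_diff_distrib sum_subtractf sum_distrib_right)
  also have "\<dots> = 0"
    using assms by (simp add: mult.commute)
  finally show ?thesis .
qed

lemma centered_indicator_variance:
  fixes c p :: "nat \<Rightarrow> real"
  assumes p_sum: "(\<Sum>i\<le>T. p i) = 1"
  shows "(\<Sum>t\<le>T. p t * (\<Sum>i\<le>T. c i * ((if t = i then 1 else 0) - p i))\<^sup>2)
     = 1/2 * (\<Sum>i1\<le>T. \<Sum>i2\<le>T. (c i1 - c i2)\<^sup>2 * p i1 * p i2)"
proof -
  define \<mu> where "\<mu> = (\<Sum>i\<le>T. c i * p i)"
  define Q where "Q = (\<Sum>i\<le>T. p i * (c i)\<^sup>2)"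
  have "(\<Sum>t\<le>T. p t * (\<Sum>i\<le>T. c i * ((if t = i then 1 else 0) - p i))\<^sup>2)
      = (\<Sum>t\<le>T. p t * (c t - \<mu>)\<^sup>2)"
    by (intro sum.cong refl) (simp add: sum_centered_indicator \<mu>_def)
  also have "\<dots> = (\<Sum>t\<le>T. p t * (c t)\<^sup>2 - 2 * \<mu> * (c t * p t) + \<mu>\<^sup>2 * p t)"
    by (intro sum.cong refl) (simp add: power2_eq_square algebra_simps)
  also have "\<dots> = Q - 2 * \<mu> * \<mu> + \<mu>\<^sup>2 * (\<Sum>t\<le>T. p t)"
    by (simp add: sum.distrib sum_subtractf sum_distrib_left Q_def \<mu>_def)
  also have "\<dots> = Q - \<mu>\<^sup>2"
    using p_sum by (simp add: power2_eq_square)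
  finally have lhs: "(\<Sum>t\<le>T. p t * (\<Sum>i\<le>T. c i * ((if t = i then 1 else 0) - p i))\<^sup>2) = Q - \<mu>\<^sup>2" .
  have "(\<Sum>i1\<le>T. \<Sum>i2\<le>T. (c i1 - c i2)\<^sup>2 * p i1 * p i2)
     = (\<Sum>i1\<le>T. \<Sum>i2\<le>T. (p i1 * (c i1)\<^sup>2) * p i2 + (p i2 * (c i2)\<^sup>2) * p i1
          - 2 * ((c i1 * p i1) * (c i2 * p i2)))"
    by (intro sum.cong refl) (simp add: power2_eq_square algebra_simps)
  also have "\<dots> = Q * (\<Sum>i\<le>T. p i) + Q * (\<Sum>i\<le>T. p i) - 2 * (\<mu> * \<mu>)"
    by (simp add: sum.distrib sum_subtractf sum_distrib_left sum_distrib_right Q_def \<mu>_def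
        sum.swap[of "\<lambda>i1 i2. p i2 * (c i2)\<^sup>2 * p i1"])
      (intro sum.cong refl; simp add: mult_ac)
  finally show ?thesis
    using lhs p_sum by (simp add: power2_eq_square)
qed

lemma delay_coeff_mean:
  assumes "(\<Sum>i\<le>tmax. p i) = 1"
  shows "(\<Sum>t\<le>tmax. delay_coeff tmax \<alpha> p g k m t * p t) = 0"
  using centered_indicator_mean[OF assms, of "\<lambda>i. gz g (int k - int m - int i) * \<alpha> i"]
  by (simp add: delay_coeff_def mult_ac)

lemma delay_coeff_variance:
  assumes "(\<Sum>i\<le>tmax. p i) = 1" and "m \<le> k"
  shows "(\<Sum>t\<le>tmax. (delay_coeff tmax \<alpha> p g k m t)\<^sup>2 * p t) = That tmax \<alpha> p g (k - m)"
  using centered_indicator_variance[OF assms(1), of "\<lambda>i. gz g (int k - int m - int i) * \<alpha> i"] assms(2)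
  by (simp add: delay_coeff_def That_def of_nat_diff mult_ac)

lemma abs_delay_coeff_le:
  "\<bar>delay_coeff tmax \<alpha> p g k m t\<bar> \<le> (\<Sum>i\<le>tmax. \<bar>gz g (int k - int m - int i) * \<alpha> i\<bar> * (1 + \<bar>p i\<bar>))"
  unfolding delay_coeff_def
proof (rule order_trans[OF sum_abs], rule sum_mono)
  fix i
  have "\<bar>(if t = i then 1 else 0) - p i\<bar> \<le> 1 + \<bar>p i\<bar>"
    by auto
  then show "\<bar>gz g (int k - int m - int i) * \<alpha> i * ((if t = i then 1 else 0) - p i)\<bar>
      \<le> \<bar>gz g (int k - int m - int i) * \<alpha> i\<bar> * (1 + \<bar>p i\<bar>)"
    unfolding abs_mult[of "gz g (int k - int m - int i) * \<alpha> i"] by (rule mult_left_mono) simp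
qed

definition square_integrable :: "'a measure \<Rightarrow> ('a \<Rightarrow> real) \<Rightarrow> bool" where
  "square_integrable M f \<longleftrightarrow> f \<in> borel_measurable M \<and> integrable M (\<lambda>x. (f x)\<^sup>2)"

lemma square_integrable_mult:
  assumes "square_integrable M f" and "square_integrable M h"
  shows "integrable M (\<lambda>x. f x * h x)"
proof (rule Bochner_Integration.integrable_bound)
  show "integrable M (\<lambda>x. (f x)\<^sup>2 + (h x)\<^sup>2)"
    using assms by (auto simp: square_integrable_def)
  show "(\<lambda>x. f x * h x) \<in> borel_measurable M"
    using assms by (auto simp: square_integrable_def)
  have "norm (f x * h x) \<le> norm ((f x)\<^sup>2 + (h x)\<^sup>2)" for x
  proof -
    have "2 * \<bar>f x\<bar> * \<bar>h x\<bar> \<le> (f x)\<^sup>2 + (h x)\<^sup>2"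
      using sum_squares_bound[of "\<bar>f x\<bar>" "\<bar>h x\<bar>"] by simp
    moreover have "0 \<le> \<bar>f x\<bar> * \<bar>h x\<bar>" and "0 \<le> (f x)\<^sup>2 + (h x)\<^sup>2"
      by simp_all
    ultimately show ?thesis
      unfolding real_norm_def abs_mult by linarith
  qed
  then show "AE x in M. norm (f x * h x) \<le> norm ((f x)\<^sup>2 + (h x)\<^sup>2)"
    by simp
qed

lemma (in finite_measure) bounded_square_integrable:
  assumes "f \<in> borel_measurable M" and "\<And>x. \<bar>f x\<bar> \<le> C"
  shows "square_integrable M f"
proof -
  have "integrable M (\<lambda>x. (f x)\<^sup>2)"
  proof (rule Bochner_Integration.integrable_bound)
    show "integrable M (\<lambda>x. C\<^sup>2)" by simp
    have "\<bar>f x\<bar> \<le> \<bar>C\<bar>" for x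
      using assms(2)[of x] by linarith
    then show "AE x in M. norm ((f x)\<^sup>2) \<le> norm (C\<^sup>2)"
      by (intro AE_I2) (simp add: abs_le_square_iff[symmetric])
  qed (use assms(1) in simp)
  with assms(1) show ?thesis
    by (simp add: square_integrable_def)
qed

lemma square_integrable_bounded_mult:
  assumes f: "square_integrable M f" and b: "b \<in> borel_measurable M" and b_le: "\<And>x. \<bar>b x\<bar> \<le> C"
  shows "square_integrable M (\<lambda>x. b x * f x)"
proof -
  have "integrable M (\<lambda>x. (b x * f x)\<^sup>2)"
  proof (rule Bochner_Integration.integrable_bound)
    show "integrable M (\<lambda>x. C\<^sup>2 * (f x)\<^sup>2)"
      using f by (simp add: square_integrable_def)
    have "\<bar>b x\<bar> \<le> \<bar>C\<bar>" for x
      using b_le[of x] by linarith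
    then have "(b x)\<^sup>2 \<le> C\<^sup>2" for x
      by (simp add: abs_le_square_iff[symmetric])
    then show "AE x in M. norm ((b x * f x)\<^sup>2) \<le> norm (C\<^sup>2 * (f x)\<^sup>2)"
      by (intro AE_I2) (simp add: power_mult_distrib mult_right_mono)
    show "(\<lambda>x. (b x * f x)\<^sup>2) \<in> borel_measurable M"
      using f b by (simp add: square_integrable_def borel_measurable_power borel_measurable_times)
  qed
  with f b show ?thesis
    by (simp add: square_integrable_def borel_measurable_times)
qed

context product_prob_space
begin

lemma indep_vars_components: "P.indep_vars M (\<lambda>i \<omega>. \<omega> i) I"
proof (cases "I = {}")
  case True
  then show ?thesis
    unfolding P.indep_vars_def P.indep_sets_def by simp
next
  case False
  show ?thesis
  proof (subst P.indep_vars_iff_distr_eq_PiM'[OF False])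
    show "random_variable (M i) (\<lambda>\<omega>. \<omega> i)" if "i \<in> I" for i
      using that by measurable
    have "distr (PiM I M) (PiM I M) (\<lambda>\<omega>. restrict \<omega> I) = distr (PiM I M) (PiM I M) (\<lambda>\<omega>. \<omega>)"
      by (rule distr_cong) (auto simp: space_PiM)
    also have "\<dots> = PiM I M"
      by (rule distr_id2) simp
    also have "\<dots> = (\<Pi>\<^sub>M i\<in>I. distr (PiM I M) (M i) (\<lambda>\<omega>. \<omega> i))"
      by (rule PiM_cong) (simp_all add: PiM_component)
    finally show "distr (PiM I M) (PiM I M) (\<lambda>\<omega>. restrict \<omega> I)
        = (\<Pi>\<^sub>M i\<in>I. distr (PiM I M) (M i) (\<lambda>\<omega>. \<omega> i))" .
  qed
qed

lemma integral_component:
  fixes h :: "'a \<Rightarrow> real"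
  assumes "i \<in> I" and "h \<in> borel_measurable (M i)"
  shows "(\<integral>\<zeta>. h (\<zeta> i) \<partial>PiM I M) = (\<integral>t. h t \<partial>M i)"
proof -
  have "(\<integral>t. h t \<partial>M i) = (\<integral>t. h t \<partial>distr (PiM I M) (M i) (\<lambda>\<zeta>. \<zeta> i))"
    by (simp add: PiM_component[OF assms(1)])
  also have "\<dots> = (\<integral>\<zeta>. h (\<zeta> i) \<partial>PiM I M)"
    by (rule integral_distr[OF measurable_component_singleton[where M = M, OF assms(1)] assms(2)])
  finally show ?thesis ..
qed

lemma integrable_component:
  fixes h :: "'a \<Rightarrow> real"
  assumes "i \<in> I" and "integrable (M i) h"
  shows "integrable (PiM I M) (\<lambda>\<zeta>. h (\<zeta> i))"
proof -
  have "integrable (distr (PiM I M) (M i) (\<lambda>\<zeta>. \<zeta> i)) h"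
    using assms by (simp add: PiM_component)
  then show ?thesis
    using assms(1) borel_measurable_integrable[OF assms(2)]
    by (subst (asm) integrable_distr_eq) simp_all
qed

lemma indep_var_component_complement:
  assumes c: "c \<in> I" and h: "h \<in> borel_measurable (M c)"
    and F: "F \<in> borel_measurable (PiM (I - {c}) M)"
  shows "P.indep_var borel (\<lambda>\<zeta>. h (\<zeta> c)) borel (\<lambda>\<zeta>. F (restrict \<zeta> (I - {c})))"
proof -
  have "P.indep_var (PiM {c} M) (\<lambda>\<zeta>. restrict \<zeta> {c}) (PiM (I - {c}) M) (\<lambda>\<zeta>. restrict \<zeta> (I - {c}))"
    using P.indep_var_restrict[OF indep_vars_components, of "{c}" "I - {c}"] c by simp
  moreover have "(\<lambda>w. h (w c)) \<in> borel_measurable (PiM {c} M)"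
    using h by measurable
  ultimately have "P.indep_var borel ((\<lambda>w. h (w c)) \<circ> (\<lambda>\<zeta>. restrict \<zeta> {c}))
      borel (F \<circ> (\<lambda>\<zeta>. restrict \<zeta> (I - {c})))"
    using F by (rule P.indep_var_compose)
  then show ?thesis
    by (simp add: comp_def)
qed

lemma integral_component_mult_invariant:
  fixes h :: "'a \<Rightarrow> real" and F :: "('i \<Rightarrow> 'a) \<Rightarrow> real"
  assumes c: "c \<in> I" and h: "integrable (M c) h" and F: "integrable (PiM I M) F"
    and F_upd: "\<And>\<zeta> t. F (\<zeta>(c := t)) = F \<zeta>"
  shows "integrable (PiM I M) (\<lambda>\<zeta>. h (\<zeta> c) * F \<zeta>)"
    and "(\<integral>\<zeta>. h (\<zeta> c) * F \<zeta> \<partial>PiM I M) = (\<integral>t. h t \<partial>M c) * (\<integral>\<zeta>. F \<zeta> \<partial>PiM I M)"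
proof -
  obtain t0 where t0: "t0 \<in> space (M c)"
    using M.not_empty by blast
  define F' where "F' w = F (w(c := t0))" for w
  have "(\<lambda>w. w(c := t0)) \<in> measurable (PiM (I - {c}) M) (PiM I M)"
    using c t0 by (intro measurable_fun_upd[where J = "I - {c}"]) auto
  then have "F' \<in> borel_measurable (PiM (I - {c}) M)"
    unfolding F'_def using borel_measurable_integrable[OF F] by (rule measurable_compose)
  with c borel_measurable_integrable[OF h]
  have indep: "P.indep_var borel (\<lambda>\<zeta>. h (\<zeta> c)) borel (\<lambda>\<zeta>. F' (restrict \<zeta> (I - {c})))"
    by (rule indep_var_component_complement)
  have F'_eq: "F' (restrict \<zeta> (I - {c})) = F \<zeta>" if "\<zeta> \<in> space (PiM I M)" for \<zeta>
  proof -
    have "(restrict \<zeta> (I - {c}))(c := t0) = \<zeta>(c := t0)"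
      using that by (auto simp: space_PiM fun_eq_iff PiE_def extensional_def)
    then show ?thesis by (simp add: F'_def F_upd)
  qed
  have "integrable (PiM I M) (\<lambda>\<zeta>. F' (restrict \<zeta> (I - {c}))) \<longleftrightarrow> integrable (PiM I M) F"
    by (rule Bochner_Integration.integrable_cong) (simp_all add: F'_eq)
  with F have F'_int: "integrable (PiM I M) (\<lambda>\<zeta>. F' (restrict \<zeta> (I - {c})))"
    by simp
  have hc_int: "integrable (PiM I M) (\<lambda>\<zeta>. h (\<zeta> c))"
    by (rule integrable_component[OF c h])
  have "integrable (PiM I M) (\<lambda>\<zeta>. h (\<zeta> c) * F' (restrict \<zeta> (I - {c})))
      \<longleftrightarrow> integrable (PiM I M) (\<lambda>\<zeta>. h (\<zeta> c) * F \<zeta>)"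
    by (rule Bochner_Integration.integrable_cong) (simp_all add: F'_eq)
  with P.indep_var_integrable[OF indep hc_int F'_int]
  show "integrable (PiM I M) (\<lambda>\<zeta>. h (\<zeta> c) * F \<zeta>)"
    by simp
  have "(\<integral>\<zeta>. h (\<zeta> c) * F \<zeta> \<partial>PiM I M) = (\<integral>\<zeta>. h (\<zeta> c) * F' (restrict \<zeta> (I - {c})) \<partial>PiM I M)"
    by (rule Bochner_Integration.integral_cong) (simp_all add: F'_eq)
  also have "\<dots> = (\<integral>\<zeta>. h (\<zeta> c) \<partial>PiM I M) * (\<integral>\<zeta>. F' (restrict \<zeta> (I - {c})) \<partial>PiM I M)"
    by (rule P.indep_var_lebesgue_integral[OF indep hc_int F'_int])
  also have "\<dots> = (\<integral>t. h t \<partial>M c) * (\<integral>\<zeta>. F \<zeta> \<partial>PiM I M)"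
    using c borel_measurable_integrable[OF h]
    by (simp add: integral_component F'_eq cong: Bochner_Integration.integral_cong)
  finally show "(\<integral>\<zeta>. h (\<zeta> c) * F \<zeta> \<partial>PiM I M) = (\<integral>t. h t \<partial>M c) * (\<integral>\<zeta>. F \<zeta> \<partial>PiM I M)" .
qed

end

lemma indep_var_distr:
  assumes N: "prob_space N" and \<phi>: "\<phi> \<in> measurable N S"
    and X: "X \<in> measurable S S1" and Y: "Y \<in> measurable S S2"
    and indep: "prob_space.indep_var N S1 (\<lambda>x. X (\<phi> x)) S2 (\<lambda>x. Y (\<phi> x))"
  shows "prob_space.indep_var (distr N S \<phi>) S1 X S2 Y"
proof -
  interpret N: prob_space N by (rule N)
  interpret D: prob_space "distr N S \<phi>" by (rule N.prob_space_distr[OF \<phi>])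
  have XY: "(\<lambda>x. (X x, Y x)) \<in> measurable S (S1 \<Otimes>\<^sub>M S2)"
    using X Y by measurable
  have "distr N S1 (\<lambda>x. X (\<phi> x)) \<Otimes>\<^sub>M distr N S2 (\<lambda>x. Y (\<phi> x))
      = distr N (S1 \<Otimes>\<^sub>M S2) (\<lambda>x. (X (\<phi> x), Y (\<phi> x)))"
    using indep N.indep_var_distribution_eq by blast
  then show ?thesis
    using X Y \<phi> XY
    by (subst D.indep_var_distribution_eq) (simp add: distr_distr comp_def)
qed

locale delay_channel =
  fixes tmax :: nat and p :: "nat \<Rightarrow> real"
  assumes p_nonneg: "\<forall>i\<le>tmax. 0 \<le> p i" and p_sum: "(\<Sum>i\<le>tmax. p i) = 1"
begin

definition delay_pmf :: "nat pmf" where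
  "delay_pmf = embed_pmf (\<lambda>i. if i \<le> tmax then p i else 0)"

lemma pmf_delay_pmf: "pmf delay_pmf i = (if i \<le> tmax then p i else 0)"
proof -
  have "(\<integral>\<^sup>+i. ennreal (if i \<le> tmax then p i else 0) \<partial>count_space UNIV)
      = ennreal (\<Sum>i\<le>tmax. p i)"
    using p_nonneg by (subst nn_integral_count_space'[of "{..tmax}"]) (auto intro!: sum_ennreal)
  then show ?thesis
    unfolding delay_pmf_def using p_nonneg p_sum by (subst pmf_embed_pmf) auto
qed

lemma set_delay_pmf: "set_pmf delay_pmf \<subseteq> {..tmax}"
  by (auto simp: set_pmf_eq pmf_delay_pmf split: if_splits)

lemma integral_delay_pmf: "(\<integral>t. f t \<partial>measure_pmf delay_pmf) = (\<Sum>t\<le>tmax. f t * p t)"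
  using set_delay_pmf by (subst integral_measure_pmf_real[where A = "{..tmax}"]) (auto simp: pmf_delay_pmf)

definition bit_pmf :: "nat pmf" where
  "bit_pmf = pmf_of_set {0, 1}"

definition rademacher :: "nat \<Rightarrow> real" where
  "rademacher b = (if b = 0 then -1 else 1)"

lemma abs_rademacher [simp]: "\<bar>rademacher b\<bar> = 1"
  by (simp add: rademacher_def)

lemma rademacher_mult_self [simp]: "rademacher b * rademacher b = 1"
  by (simp add: rademacher_def)

lemma integral_rademacher_bit_pmf: "(\<integral>b. rademacher b \<partial>measure_pmf bit_pmf) = 0"
  by (subst integral_measure_pmf_real[where A = "{0, 1}"]) (auto simp: bit_pmf_def rademacher_def)

text \<open>Coordinate \<open>Inl n\<close> carries the delay \<open>\<tau>\<^sub>n\<close>, coordinate \<open>Inr k\<close> a fair bit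
  whose sign is the input \<open>v(k) = \<plusminus>1\<close>.\<close>

definition coord_pmf :: "nat + nat \<Rightarrow> nat pmf" where
  "coord_pmf c = (case c of Inl _ \<Rightarrow> delay_pmf | Inr _ \<Rightarrow> bit_pmf)"

lemma coord_pmf_simps [simp]:
  "coord_pmf (Inl n) = delay_pmf" "coord_pmf (Inr k) = bit_pmf"
  by (simp_all add: coord_pmf_def)

sublocale coords: product_prob_space "\<lambda>c. measure_pmf (coord_pmf c)" UNIV
  by unfold_locales

abbreviation \<Omega> :: "(nat + nat \<Rightarrow> nat) measure" where
  "\<Omega> \<equiv> PiM UNIV (\<lambda>c. measure_pmf (coord_pmf c))"

lemma finite_set_coord_pmf: "finite (set_pmf (coord_pmf c))"
  using set_delay_pmf by (cases c) (auto simp: coord_pmf_def bit_pmf_def intro: finite_subset)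

lemma integrable_coord: "integrable \<Omega> (\<lambda>\<zeta>. h (\<zeta> c) :: real)"
  by (rule coords.integrable_component) (simp_all add: integrable_measure_pmf_finite finite_set_coord_pmf)

lemma integral_coord: "(\<integral>\<zeta>. h (\<zeta> c) \<partial>\<Omega>) = (\<integral>t. h t \<partial>measure_pmf (coord_pmf c) :: real)"
  by (rule coords.integral_component) simp_all

lemma integral_coord_mult_invariant:
  fixes h :: "nat \<Rightarrow> real"
  assumes "integrable \<Omega> F" and "\<And>\<zeta> t. F (\<zeta>(c := t)) = F \<zeta>"
  shows "integrable \<Omega> (\<lambda>\<zeta>. h (\<zeta> c) * F \<zeta>)"
    and "(\<integral>\<zeta>. h (\<zeta> c) * F \<zeta> \<partial>\<Omega>) = (\<integral>t. h t \<partial>measure_pmf (coord_pmf c)) * (\<integral>\<zeta>. F \<zeta> \<partial>\<Omega>)"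
  using coords.integral_component_mult_invariant[of c h F] assms
  by (simp_all add: integrable_measure_pmf_finite finite_set_coord_pmf)

lemma integral_rademacher_mult:
  "(\<integral>\<zeta>. rademacher (\<zeta> (Inr a)) * rademacher (\<zeta> (Inr b)) \<partial>\<Omega>) = (if a = b then 1 else 0)"
proof (cases "a = b")
  case False
  then have "(\<integral>\<zeta>. rademacher (\<zeta> (Inr a)) * rademacher (\<zeta> (Inr b)) \<partial>\<Omega>)
      = (\<integral>t. rademacher t \<partial>measure_pmf bit_pmf) * (\<integral>\<zeta>. rademacher (\<zeta> (Inr b)) \<partial>\<Omega>)"
    by (subst integral_coord_mult_invariant(2)) (simp_all add: integrable_coord[of rademacher])
  with False show ?thesis
    by (simp add: integral_rademacher_bit_pmf)
qed (simp add: coords.P.prob_space)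

lemma integrable_rademacher_mult: "integrable \<Omega> (\<lambda>\<zeta>. rademacher (\<zeta> (Inr a)) * rademacher (\<zeta> (Inr b)))"
  by (intro square_integrable_mult coords.P.bounded_square_integrable[where C = 1]) simp_all

end

locale closed_loop = delay_channel +
  fixes \<alpha> g :: "nat \<Rightarrow> real"
  assumes g0: "g 0 = 0"
begin

definition loop_u :: "nat \<Rightarrow> (nat + nat \<Rightarrow> nat) \<Rightarrow> real" where
  "loop_u k \<zeta> = cl_u g tmax (omega tmax \<alpha> p (\<lambda>n. \<zeta> (Inl n))) (\<lambda>j. rademacher (\<zeta> (Inr j))) k"

definition filtered_v :: "nat \<Rightarrow> (nat + nat \<Rightarrow> nat) \<Rightarrow> real" where
  "filtered_v k \<zeta> = (\<Sum>n\<in>{1..k}. g n * rademacher (\<zeta> (Inr (k - n))))"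

definition loop_coeff :: "nat \<Rightarrow> nat \<Rightarrow> (nat + nat \<Rightarrow> nat) \<Rightarrow> real" where
  "loop_coeff k m \<zeta> = delay_coeff tmax \<alpha> p g k m (\<zeta> (Inl m))"

lemma loop_u_volterra: "loop_u k \<zeta> = filtered_v k \<zeta> - (\<Sum>m<k. loop_coeff k m \<zeta> * loop_u m \<zeta>)"
  unfolding loop_u_def filtered_v_def loop_coeff_def
  by (subst cl_u_volterra[where g = g, OF g0]) simp

lemma filtered_v_measurable [measurable]: "filtered_v k \<in> borel_measurable \<Omega>"
  unfolding filtered_v_def by measurable

lemma loop_coeff_measurable [measurable]: "loop_coeff k m \<in> borel_measurable \<Omega>"
  unfolding loop_coeff_def by measurable

lemma loop_u_measurable [measurable]: "loop_u k \<in> borel_measurable \<Omega>"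
proof (induction k rule: less_induct)
  case (less k)
  have "(\<lambda>\<zeta>. filtered_v k \<zeta> - (\<Sum>m<k. loop_coeff k m \<zeta> * loop_u m \<zeta>)) \<in> borel_measurable \<Omega>"
    using less by measurable
  then show ?case
    by (simp only: loop_u_volterra[symmetric])
qed

lemma filtered_v_upd_delay [simp]: "filtered_v k (\<zeta>(Inl j := t)) = filtered_v k \<zeta>"
  by (simp add: filtered_v_def)

lemma loop_coeff_upd_delay [simp]: "m \<noteq> j \<Longrightarrow> loop_coeff k m (\<zeta>(Inl j := t)) = loop_coeff k m \<zeta>"
  by (simp add: loop_coeff_def)

lemma loop_u_upd_delay: "m \<le> j \<Longrightarrow> loop_u m (\<zeta>(Inl j := t)) = loop_u m \<zeta>"
proof (induction m rule: less_induct)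
  case (less m)
  have "loop_coeff m m' (\<zeta>(Inl j := t)) * loop_u m' (\<zeta>(Inl j := t)) = loop_coeff m m' \<zeta> * loop_u m' \<zeta>"
    if "m' < m" for m'
  proof -
    have "loop_u m' (\<zeta>(Inl j := t)) = loop_u m' \<zeta>"
      using that less.prems by (intro less.IH) auto
    moreover have "m' \<noteq> j"
      using that less.prems by simp
    ultimately show ?thesis by simp
  qed
  then have "(\<Sum>m'<m. loop_coeff m m' (\<zeta>(Inl j := t)) * loop_u m' (\<zeta>(Inl j := t)))
      = (\<Sum>m'<m. loop_coeff m m' \<zeta> * loop_u m' \<zeta>)"
    by (intro sum.cong) simp_all
  then show ?case
    using loop_u_volterra[of m \<zeta>] loop_u_volterra[of m "\<zeta>(Inl j := t)"]
      filtered_v_upd_delay[of m \<zeta> j t] by linarith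
qed

lemma square_integrable_filtered_v: "square_integrable \<Omega> (filtered_v k)"
proof (rule coords.P.bounded_square_integrable)
  show "\<bar>filtered_v k \<zeta>\<bar> \<le> (\<Sum>n\<in>{1..k}. \<bar>g n\<bar>)" for \<zeta>
    unfolding filtered_v_def by (rule order_trans[OF sum_abs]) (simp add: abs_mult)
qed simp

lemma square_integrable_loop_coeff_mult:
  assumes "square_integrable \<Omega> f"
  shows "square_integrable \<Omega> (\<lambda>\<zeta>. loop_coeff k m \<zeta> * f \<zeta>)"
  using assms loop_coeff_measurable abs_delay_coeff_le unfolding loop_coeff_def
  by (rule square_integrable_bounded_mult)

lemma integral_filtered_v_sq: "(\<integral>\<zeta>. (filtered_v k \<zeta>)\<^sup>2 \<partial>\<Omega>) = (\<Sum>n\<in>{1..k}. (g n)\<^sup>2)"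
proof -
  have "(\<integral>\<zeta>. (filtered_v k \<zeta>)\<^sup>2 \<partial>\<Omega>) = (\<integral>\<zeta>. (\<Sum>n\<in>{1..k}. \<Sum>n'\<in>{1..k}.
      g n * g n' * (rademacher (\<zeta> (Inr (k - n))) * rademacher (\<zeta> (Inr (k - n'))))) \<partial>\<Omega>)"
    unfolding filtered_v_def power2_eq_square sum_product by (simp add: mult_ac)
  also have "\<dots> = (\<Sum>n\<in>{1..k}. \<Sum>n'\<in>{1..k}.
      g n * g n' * (\<integral>\<zeta>. rademacher (\<zeta> (Inr (k - n))) * rademacher (\<zeta> (Inr (k - n'))) \<partial>\<Omega>))"
    by (simp add: Bochner_Integration.integral_sum Bochner_Integration.integrable_sum
        integrable_rademacher_mult)
  also have "\<dots> = (\<Sum>n\<in>{1..k}. \<Sum>n'\<in>{1..k}. if n' = n then (g n)\<^sup>2 else 0)"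
    by (intro sum.cong refl) (auto simp: integral_rademacher_mult power2_eq_square)
  also have "\<dots> = (\<Sum>n\<in>{1..k}. (g n)\<^sup>2)"
    by simp
  finally show ?thesis .
qed

lemma integral_loop_coeff_mult:
  assumes "integrable \<Omega> F" and "\<And>\<zeta> t. F (\<zeta>(Inl m := t)) = F \<zeta>"
  shows "(\<integral>\<zeta>. loop_coeff k m \<zeta> * F \<zeta> \<partial>\<Omega>) = 0"
  using integral_coord_mult_invariant(2)[of F "Inl m" "delay_coeff tmax \<alpha> p g k m"] assms
  by (simp add: loop_coeff_def integral_delay_pmf delay_coeff_mean[OF p_sum])

lemma integral_loop_coeff_sq_mult:
  assumes "integrable \<Omega> F" and "\<And>\<zeta> t. F (\<zeta>(Inl m := t)) = F \<zeta>" and "m \<le> k"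
  shows "(\<integral>\<zeta>. (loop_coeff k m \<zeta>)\<^sup>2 * F \<zeta> \<partial>\<Omega>) = That tmax \<alpha> p g (k - m) * (\<integral>\<zeta>. F \<zeta> \<partial>\<Omega>)"
  using integral_coord_mult_invariant(2)[of F "Inl m" "\<lambda>t. (delay_coeff tmax \<alpha> p g k m t)\<^sup>2"] assms
  by (simp add: loop_coeff_def integral_delay_pmf delay_coeff_variance[OF p_sum])

lemma integral_filtered_v_mult_coeff_u:
  assumes "square_integrable \<Omega> (loop_u m)"
  shows "(\<integral>\<zeta>. filtered_v k \<zeta> * (loop_coeff k m \<zeta> * loop_u m \<zeta>) \<partial>\<Omega>) = 0"
proof -
  have "(\<integral>\<zeta>. filtered_v k \<zeta> * (loop_coeff k m \<zeta> * loop_u m \<zeta>) \<partial>\<Omega>)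
      = (\<integral>\<zeta>. loop_coeff k m \<zeta> * (filtered_v k \<zeta> * loop_u m \<zeta>) \<partial>\<Omega>)"
    by (simp add: mult_ac)
  also have "\<dots> = 0"
    using assms square_integrable_filtered_v
    by (intro integral_loop_coeff_mult square_integrable_mult) (simp_all add: loop_u_upd_delay)
  finally show ?thesis .
qed

lemma integral_coeff_u_mult_coeff_u:
  assumes "m < m'" and "square_integrable \<Omega> (loop_u m)" and "square_integrable \<Omega> (loop_u m')"
  shows "(\<integral>\<zeta>. (loop_coeff k m \<zeta> * loop_u m \<zeta>) * (loop_coeff k m' \<zeta> * loop_u m' \<zeta>) \<partial>\<Omega>) = 0"
proof -
  have "(\<integral>\<zeta>. (loop_coeff k m \<zeta> * loop_u m \<zeta>) * (loop_coeff k m' \<zeta> * loop_u m' \<zeta>) \<partial>\<Omega>)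
      = (\<integral>\<zeta>. loop_coeff k m' \<zeta> * ((loop_coeff k m \<zeta> * loop_u m \<zeta>) * loop_u m' \<zeta>) \<partial>\<Omega>)"
    by (simp add: mult_ac)
  also have "\<dots> = 0"
    using assms
    by (intro integral_loop_coeff_mult square_integrable_mult square_integrable_loop_coeff_mult)
      (simp_all add: loop_u_upd_delay)
  finally show ?thesis .
qed

lemma integral_coeff_u_sq:
  assumes "m \<le> k" and "square_integrable \<Omega> (loop_u m)"
  shows "(\<integral>\<zeta>. (loop_coeff k m \<zeta> * loop_u m \<zeta>) * (loop_coeff k m \<zeta> * loop_u m \<zeta>) \<partial>\<Omega>)
       = That tmax \<alpha> p g (k - m) * (\<integral>\<zeta>. (loop_u m \<zeta>)\<^sup>2 \<partial>\<Omega>)"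
proof -
  have "(\<integral>\<zeta>. (loop_coeff k m \<zeta> * loop_u m \<zeta>) * (loop_coeff k m \<zeta> * loop_u m \<zeta>) \<partial>\<Omega>)
      = (\<integral>\<zeta>. (loop_coeff k m \<zeta>)\<^sup>2 * (loop_u m \<zeta>)\<^sup>2 \<partial>\<Omega>)"
    by (simp add: power2_eq_square mult_ac)
  also have "\<dots> = That tmax \<alpha> p g (k - m) * (\<integral>\<zeta>. (loop_u m \<zeta>)\<^sup>2 \<partial>\<Omega>)"
    using assms
    by (intro integral_loop_coeff_sq_mult) (simp_all add: square_integrable_def loop_u_upd_delay)
  finally show ?thesis .
qed

lemma integral_coeff_u_mult_coeff_u_eq:
  assumes "m < k" and u_sq: "\<And>m. square_integrable \<Omega> (loop_u m)"
  shows "(\<integral>\<zeta>. (loop_coeff k m \<zeta> * loop_u m \<zeta>) * (loop_coeff k m' \<zeta> * loop_u m' \<zeta>) \<partial>\<Omega>)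
       = (if m' = m then That tmax \<alpha> p g (k - m) * (\<integral>\<zeta>. (loop_u m \<zeta>)\<^sup>2 \<partial>\<Omega>) else 0)"
proof (cases m m' rule: linorder_cases)
  case less
  then show ?thesis
    using u_sq by (simp add: integral_coeff_u_mult_coeff_u)
next
  case equal
  then show ?thesis
    using assms by (simp add: integral_coeff_u_sq)
next
  case greater
  have "(\<integral>\<zeta>. (loop_coeff k m \<zeta> * loop_u m \<zeta>) * (loop_coeff k m' \<zeta> * loop_u m' \<zeta>) \<partial>\<Omega>)
      = (\<integral>\<zeta>. (loop_coeff k m' \<zeta> * loop_u m' \<zeta>) * (loop_coeff k m \<zeta> * loop_u m \<zeta>) \<partial>\<Omega>)"
    by (simp add: mult.commute)
  then show ?thesis
    using greater u_sq by (simp add: integral_coeff_u_mult_coeff_u)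
qed

text \<open>Expanding the square of \<open>loop_u_volterra\<close>, all cross terms vanish: \<open>loop_coeff k m\<close> has
  mean zero and depends only on \<open>\<tau>\<^sub>m\<close>, while \<open>filtered_v k\<close> and \<open>loop_u m'\<close> for \<open>m' \<le> m\<close> do
  not depend on \<open>\<tau>\<^sub>m\<close>.\<close>

lemma integral_loop_u_sq:
  assumes u_sq: "\<And>m. square_integrable \<Omega> (loop_u m)"
  shows "(\<integral>\<zeta>. (loop_u k \<zeta>)\<^sup>2 \<partial>\<Omega>)
       = (\<Sum>n\<in>{1..k}. (g n)\<^sup>2) + (\<Sum>m<k. That tmax \<alpha> p g (k - m) * (\<integral>\<zeta>. (loop_u m \<zeta>)\<^sup>2 \<partial>\<Omega>))"
proof -
  define Y where "Y m \<zeta> = loop_coeff k m \<zeta> * loop_u m \<zeta>" for m \<zeta>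
  have Y_sq: "square_integrable \<Omega> (Y m)" for m
    unfolding Y_def[abs_def] using u_sq by (rule square_integrable_loop_coeff_mult)
  have "(loop_u k \<zeta>)\<^sup>2
      = (filtered_v k \<zeta>)\<^sup>2 - 2 * (\<Sum>m<k. filtered_v k \<zeta> * Y m \<zeta>) + (\<Sum>m<k. \<Sum>m'<k. Y m \<zeta> * Y m' \<zeta>)"
    for \<zeta>
    unfolding loop_u_volterra[of k] Y_def[symmetric] sum_distrib_left[symmetric] sum_product[symmetric]
    by (simp add: power2_eq_square algebra_simps sum_distrib_right)
  then have "(\<integral>\<zeta>. (loop_u k \<zeta>)\<^sup>2 \<partial>\<Omega>) = (\<integral>\<zeta>. (filtered_v k \<zeta>)\<^sup>2 \<partial>\<Omega>)
      - 2 * (\<Sum>m<k. \<integral>\<zeta>. filtered_v k \<zeta> * Y m \<zeta> \<partial>\<Omega>) + (\<Sum>m<k. \<Sum>m'<k. \<integral>\<zeta>. Y m \<zeta> * Y m' \<zeta> \<partial>\<Omega>)"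
    using square_integrable_filtered_v[of k] square_integrable_mult[OF square_integrable_filtered_v Y_sq]
      square_integrable_mult[OF Y_sq Y_sq]
    by (simp add: square_integrable_def Bochner_Integration.integral_sum
        Bochner_Integration.integrable_sum Bochner_Integration.integral_add
        Bochner_Integration.integral_diff)
  also have "\<dots> = (\<Sum>n\<in>{1..k}. (g n)\<^sup>2) + (\<Sum>m<k. That tmax \<alpha> p g (k - m) * (\<integral>\<zeta>. (loop_u m \<zeta>)\<^sup>2 \<partial>\<Omega>))"
    using u_sq
    by (simp add: Y_def integral_filtered_v_sq integral_filtered_v_mult_coeff_u
        integral_coeff_u_mult_coeff_u_eq)
  finally show ?thesis .
qed

end

text \<open>The loop driven on \<open>\<Omega>\<close> is one admissible instance in the definition of \<open>ms_stable\<close>, once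
  transported to the canonical sample space.\<close>

context delay_channel
begin

definition sample_of :: "(nat + nat \<Rightarrow> nat) \<Rightarrow> sample" where
  "sample_of \<zeta> = (\<lambda>n. \<zeta> (Inl n), \<lambda>k. rademacher (\<zeta> (Inr k)))"

definition sample_space :: "sample measure" where
  "sample_space = PiM UNIV (\<lambda>_. count_space UNIV) \<Otimes>\<^sub>M PiM UNIV (\<lambda>_. borel)"

definition sample_measure :: "sample measure" where
  "sample_measure = distr \<Omega> sample_space sample_of"

lemma delay_measurable [measurable]: "(\<lambda>x. fst x n) \<in> measurable sample_space (count_space UNIV)"
  unfolding sample_space_def by measurable

lemma input_measurable [measurable]: "(\<lambda>x. snd x k) \<in> borel_measurable sample_space"
  unfolding sample_space_def by measurable

lemma sample_of_measurable [measurable]: "sample_of \<in> measurable \<Omega> sample_space"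
  unfolding sample_of_def sample_space_def
  by (intro measurable_Pair measurable_PiM_single') auto

lemma prob_space_sample_measure: "prob_space sample_measure"
  unfolding sample_measure_def by (rule coords.P.prob_space_distr) simp

lemma measurable_sample_measure [simp]: "measurable sample_measure N = measurable sample_space N"
  unfolding sample_measure_def by (rule measurable_distr_eq1)

lemma integral_sample_measure:
  fixes f :: "sample \<Rightarrow> real"
  assumes "f \<in> borel_measurable sample_space"
  shows "(\<integral>x. f x \<partial>sample_measure) = (\<integral>\<zeta>. f (sample_of \<zeta>) \<partial>\<Omega>)"
  unfolding sample_measure_def by (rule integral_distr[OF sample_of_measurable assms])

lemma integrable_sample_measure:
  fixes f :: "sample \<Rightarrow> real"
  assumes "f \<in> borel_measurable sample_space"
  shows "integrable sample_measure f \<longleftrightarrow> integrable \<Omega> (\<lambda>\<zeta>. f (sample_of \<zeta>))"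
  unfolding sample_measure_def by (rule integrable_distr_eq[OF sample_of_measurable assms])

lemma distr_sample_measure_delay:
  "distr sample_measure (count_space UNIV) (\<lambda>x. fst x n) = measure_pmf delay_pmf"
proof -
  have "distr sample_measure (count_space UNIV) (\<lambda>x. fst x n)
      = distr \<Omega> (measure_pmf (coord_pmf (Inl n))) (\<lambda>\<zeta>. \<zeta> (Inl n))"
    unfolding sample_measure_def
    by (subst distr_distr) (auto simp: comp_def sample_of_def intro!: distr_cong)
  also have "\<dots> = measure_pmf delay_pmf"
    using coords.PiM_component[of "Inl n"] by simp
  finally show ?thesis .
qed

lemma indep_vars_sample_delays:
  "prob_space.indep_vars sample_measure (\<lambda>_. count_space UNIV) (\<lambda>n x. fst x n) UNIV"
proof -
  interpret prob_space sample_measure by (rule prob_space_sample_measure)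
  have "distr sample_measure (PiM UNIV (\<lambda>_. count_space UNIV)) (\<lambda>x. \<lambda>n\<in>UNIV. fst x n)
      = distr \<Omega> (PiM UNIV (\<lambda>n. measure_pmf (coord_pmf (Inl n)))) (\<lambda>\<zeta>. \<lambda>n\<in>UNIV. \<zeta> (Inl n))"
    unfolding sample_measure_def
    by (subst distr_distr) (auto simp: comp_def sample_of_def intro!: distr_cong sets_PiM_cong)
  also have "\<dots> = PiM UNIV (\<lambda>n. measure_pmf (coord_pmf (Inl n)))"
    by (rule distr_PiM_reindex) (auto simp: measure_pmf.prob_space_axioms)
  also have "\<dots> = (\<Pi>\<^sub>M n\<in>UNIV. distr sample_measure (count_space UNIV) (\<lambda>x. fst x n))"
    by (simp add: distr_sample_measure_delay)
  finally show ?thesis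
    by (subst indep_vars_iff_distr_eq_PiM') simp_all
qed

lemma indep_var_delays_signs:
  "coords.P.indep_var (PiM UNIV (\<lambda>_. count_space UNIV)) (\<lambda>\<zeta> n. real (\<zeta> (Inl n)))
     (PiM UNIV (\<lambda>_. borel)) (\<lambda>\<zeta> k. rademacher (\<zeta> (Inr k)))"
proof -
  let ?M = "\<lambda>c. measure_pmf (coord_pmf c)"
  have "coords.P.indep_var (PiM (range Inl) ?M) (\<lambda>\<zeta>. restrict \<zeta> (range Inl))
      (PiM (range Inr) ?M) (\<lambda>\<zeta>. restrict \<zeta> (range Inr))"
    using coords.P.indep_var_restrict[OF coords.indep_vars_components, of "range Inl" "range Inr"]
    by auto
  moreover have "(\<lambda>w n. real (w (Inl n))) \<in> measurable (PiM (range Inl) ?M) (PiM UNIV (\<lambda>_. count_space UNIV))"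
  proof (rule measurable_PiM_single')
    fix n
    have "(\<lambda>w. w (Inl n)) \<in> measurable (PiM (range Inl) ?M) (?M (Inl n))"
      by (rule measurable_component_singleton) simp
    then show "(\<lambda>w. real (w (Inl n))) \<in> measurable (PiM (range Inl) ?M) (count_space UNIV)"
      by (rule measurable_compose) simp
  qed simp
  moreover have "(\<lambda>w k. rademacher (w (Inr k))) \<in> measurable (PiM (range Inr) ?M) (PiM UNIV (\<lambda>_. borel))"
  proof (rule measurable_PiM_single')
    fix k
    have "(\<lambda>w. w (Inr k)) \<in> measurable (PiM (range Inr) ?M) (?M (Inr k))"
      by (rule measurable_component_singleton) simp
    then show "(\<lambda>w. rademacher (w (Inr k))) \<in> borel_measurable (PiM (range Inr) ?M)"
      by (rule measurable_compose) simp
  qed simp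
  ultimately have "coords.P.indep_var
      (PiM UNIV (\<lambda>_. count_space UNIV)) ((\<lambda>w n. real (w (Inl n))) \<circ> (\<lambda>\<zeta>. restrict \<zeta> (range Inl)))
      (PiM UNIV (\<lambda>_. borel)) ((\<lambda>w k. rademacher (w (Inr k))) \<circ> (\<lambda>\<zeta>. restrict \<zeta> (range Inr)))"
    by (rule coords.P.indep_var_compose)
  then show ?thesis
    by (simp add: comp_def)
qed

lemma indep_var_sample_delays_inputs:
  "prob_space.indep_var sample_measure (PiM UNIV (\<lambda>_. count_space UNIV)) (\<lambda>x n. real (fst x n))
     (PiM UNIV (\<lambda>_. borel)) (\<lambda>x k. snd x k)"
  unfolding sample_measure_def
proof (rule indep_var_distr[OF coords.P.prob_space_axioms sample_of_measurable])
  show "(\<lambda>x n. real (fst x n)) \<in> measurable sample_space (PiM UNIV (\<lambda>_. count_space UNIV))"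
    by (rule measurable_PiM_single') (simp_all add: measurable_compose[OF delay_measurable])
  show "(\<lambda>x k. snd x k) \<in> measurable sample_space (PiM UNIV (\<lambda>_. borel))"
    by (rule measurable_PiM_single') auto
  show "coords.P.indep_var (PiM UNIV (\<lambda>_. count_space UNIV)) (\<lambda>x n. real (fst (sample_of x) n))
      (PiM UNIV (\<lambda>_. borel)) (\<lambda>x k. snd (sample_of x) k)"
    using indep_var_delays_signs by (simp add: sample_of_def)
qed

lemma AE_sample_delay_le: "AE x in sample_measure. fst x n \<le> tmax"
proof -
  have "AE t in measure_pmf (coord_pmf (Inl n)). t \<le> tmax"
    by (rule AE_pmfI) (use set_delay_pmf in auto)
  then have "AE \<zeta> in \<Omega>. \<zeta> (Inl n) \<le> tmax"
    by (rule coords.AE_component[OF UNIV_I])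
  then show ?thesis
    unfolding sample_measure_def by (subst AE_distr_iff) (auto simp: sample_of_def)
qed

lemma prob_sample_delay_eq:
  assumes "i \<le> tmax"
  shows "measure sample_measure {x \<in> space sample_measure. fst x n = i} = p i"
proof -
  have "measure sample_measure {x \<in> space sample_measure. fst x n = i}
      = measure (distr sample_measure (count_space UNIV) (\<lambda>x. fst x n)) {i}"
    by (subst measure_distr) (auto intro!: arg_cong[where f = "measure sample_measure"])
  also have "\<dots> = p i"
    using assms by (simp add: distr_sample_measure_delay measure_pmf_single pmf_delay_pmf)
  finally show ?thesis .
qed

lemma integral_sample_input:
  "(\<integral>x. f (snd x k) \<partial>sample_measure) = (\<integral>\<zeta>. f (rademacher (\<zeta> (Inr k))) \<partial>\<Omega>)"
  if "f \<in> borel_measurable borel" for f :: "real \<Rightarrow> real"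
  using that by (subst integral_sample_measure) (simp_all add: sample_of_def)

lemma admissible_sample_measure: "admissible sample_measure tmax p (\<lambda>n x. fst x n) (\<lambda>k x. snd x k)"
  unfolding admissible_def
proof (intro conjI allI impI)
  show "integrable sample_measure (\<lambda>x. (snd x k)\<^sup>2)" for k
    by (subst integrable_sample_measure) (simp_all add: sample_of_def integrable_coord[of "\<lambda>b. (rademacher b)\<^sup>2"])
  show "(\<integral>x. snd x k \<partial>sample_measure) = 0" for k
    using integral_sample_input[of "\<lambda>x. x" k]
    by (simp add: integral_coord integral_rademacher_bit_pmf)
  show "(\<integral>x. snd x k * snd x l \<partial>sample_measure) = 0" if "k \<noteq> l" for k l
    using that
    by (subst integral_sample_measure) (simp_all add: sample_of_def integral_rademacher_mult)
  have "(\<integral>x. (snd x k)\<^sup>2 \<partial>sample_measure) = 1" for k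
    using integral_sample_input[of "\<lambda>x. x\<^sup>2" k]
    by (simp add: power2_eq_square coords.P.prob_space)
  then show "\<exists>B. \<forall>k. (\<integral>x. (snd x k)\<^sup>2 \<partial>sample_measure) \<le> B"
    by auto
qed (simp_all add: prob_space_sample_measure indep_vars_sample_delays AE_sample_delay_le
    prob_sample_delay_eq indep_var_sample_delays_inputs)

end

context closed_loop
begin

lemma That_nonneg: "0 \<le> That tmax \<alpha> p g m"
  unfolding That_def using p_nonneg by (auto intro!: sum_nonneg)

lemma That_0: "That tmax \<alpha> p g 0 = 0"
proof -
  have "gz g (int 0 - int i) = 0" for i
    using g0 by (simp add: gz_def)
  then show ?thesis
    by (simp add: That_def)
qed

lemma ms_stable_loop_u:
  assumes "ms_stable tmax \<alpha> p G g"
  obtains B where "\<And>k. square_integrable \<Omega> (loop_u k)" and "\<And>k. (\<integral>\<zeta>. (loop_u k \<zeta>)\<^sup>2 \<partial>\<Omega>) \<le> B"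
proof -
  define u where "u k x = cl_u g tmax (omega tmax \<alpha> p (\<lambda>n. fst x n)) (\<lambda>k. snd x k) k" for k x
  have "(\<forall>k. integrable sample_measure (\<lambda>x. (u k x)\<^sup>2))
      \<and> (\<exists>B. \<forall>k. (\<integral>x. (u k x)\<^sup>2 \<partial>sample_measure) \<le> B)"
    using assms admissible_sample_measure unfolding ms_stable_def Let_def u_def by blast
  then obtain B where u_int: "\<And>k. integrable sample_measure (\<lambda>x. (u k x)\<^sup>2)"
    and u_le: "\<And>k. (\<integral>x. (u k x)\<^sup>2 \<partial>sample_measure) \<le> B"
    by blast
  have u_sample_of: "u k (sample_of \<zeta>) = loop_u k \<zeta>" for k \<zeta>
    by (simp add: u_def loop_u_def sample_of_def)
  have u_meas: "(\<lambda>x. (u k x)\<^sup>2) \<in> borel_measurable sample_space" for k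
    using borel_measurable_integrable[OF u_int[of k]] by simp
  show ?thesis
  proof
    show "square_integrable \<Omega> (loop_u k)" for k
      using u_int[of k] unfolding integrable_sample_measure[OF u_meas]
      by (simp add: u_sample_of square_integrable_def)
    show "(\<integral>\<zeta>. (loop_u k \<zeta>)\<^sup>2 \<partial>\<Omega>) \<le> B" for k
      using u_le[of k] unfolding integral_sample_measure[OF u_meas] by (simp add: u_sample_of)
  qed
qed

lemma ms_stable_imp_That_sum_less_1:
  assumes stable: "ms_stable tmax \<alpha> p G g" and T_sums: "That tmax \<alpha> p g sums \<tau>"
  shows "\<tau> < 1"
proof (cases "\<exists>n0. g n0 \<noteq> 0")
  case False
  then have "gz g m = 0" for m
    by (simp add: gz_def)
  then have "That tmax \<alpha> p g = (\<lambda>_. 0)"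
    by (simp add: That_def fun_eq_iff)
  with T_sums have "\<tau> = 0"
    using sums_unique2[OF sums_zero] by simp
  then show ?thesis
    by simp
next
  case True
  then obtain n0 where gn0: "g n0 \<noteq> 0" by blast
  then have "1 \<le> n0"
    using g0 by (cases n0) auto
  obtain B where u_sq: "\<And>k. square_integrable \<Omega> (loop_u k)"
    and u_le: "\<And>k. (\<integral>\<zeta>. (loop_u k \<zeta>)\<^sup>2 \<partial>\<Omega>) \<le> B"
    using ms_stable_loop_u[OF stable] by blast
  show ?thesis
  proof (rule renewal_bounded_imp_mass_less_1[where B = B])
    show "(\<integral>\<zeta>. (loop_u k \<zeta>)\<^sup>2 \<partial>\<Omega>)
        = (\<Sum>n\<in>{1..k}. (g n)\<^sup>2) + (\<Sum>m<k. That tmax \<alpha> p g (k - m) * (\<integral>\<zeta>. (loop_u m \<zeta>)\<^sup>2 \<partial>\<Omega>))"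
      for k by (rule integral_loop_u_sq[OF u_sq])
    show "(g n0)\<^sup>2 \<le> (\<Sum>n\<in>{1..k}. (g n)\<^sup>2)" if "n0 \<le> k" for k
      by (rule member_le_sum) (use that \<open>1 \<le> n0\<close> in auto)
    show "0 \<le> (\<integral>\<zeta>. (loop_u k \<zeta>)\<^sup>2 \<partial>\<Omega>)" for k
      by (rule integral_nonneg_AE) simp
    show "0 < (g n0)\<^sup>2"
      using gn0 by simp
  qed (simp_all add: That_nonneg That_0 T_sums u_le)
qed

end

section \<open>Parseval's identity\<close>

lemma cmod_sq_trig_sum:
  fixes c :: "nat \<Rightarrow> real"
  shows "(cmod (\<Sum>m<N. complex_of_real (c m) * cis (- (real m * t))))\<^sup>2
       = (\<Sum>m<N. \<Sum>n<N. c m * c n * cos (real_of_int (int n - int m) * t))"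
proof -
  let ?z = "\<Sum>m<N. complex_of_real (c m) * cis (- (real m * t))"
  have "complex_of_real ((cmod ?z)\<^sup>2) = ?z * cnj ?z"
    by (rule complex_norm_square)
  also have "\<dots> = (\<Sum>m<N. \<Sum>n<N. complex_of_real (c m * c n) * cis (real_of_int (int n - int m) * t))"
    unfolding cnj_sum sum_product
    by (intro sum.cong refl) (simp add: cis_cnj cis_mult algebra_simps)
  finally have "(cmod ?z)\<^sup>2
      = Re (\<Sum>m<N. \<Sum>n<N. complex_of_real (c m * c n) * cis (real_of_int (int n - int m) * t))"
    by (metis Re_complex_of_real)
  then show ?thesis
    by (simp add: Re_sum)
qed

lemma parseval_trig_sum:
  fixes c :: "nat \<Rightarrow> real"
  shows "((\<lambda>t. (cmod (\<Sum>m<N. complex_of_real (c m) * cis (- (real m * t))))\<^sup>2) has_integral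
           (2 * pi * (\<Sum>m<N. (c m)\<^sup>2))) {-pi..pi}"
proof -
  have "((\<lambda>t. \<Sum>m<N. \<Sum>n<N. c m * c n * cos (real_of_int (int n - int m) * t)) has_integral
          (\<Sum>m<N. \<Sum>n<N. c m * c n * (if int n - int m = 0 then 2 * pi else 0))) {-pi..pi}"
    by (intro has_integral_sum finite_lessThan has_integral_mult_right has_integral_cos_nx)
  also have "(\<Sum>m<N. \<Sum>n<N. c m * c n * (if int n - int m = 0 then 2 * pi else 0))
      = (\<Sum>m<N. \<Sum>n<N. if n = m then 2 * pi * (c m)\<^sup>2 else 0)"
    by (intro sum.cong refl) (auto simp: power2_eq_square)
  also have "\<dots> = 2 * pi * (\<Sum>m<N. (c m)\<^sup>2)"
    by (simp add: sum_distrib_left)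
  finally show ?thesis
    by (simp add: cmod_sq_trig_sum)
qed

lemma abs_summable_imp_summable_power2:
  fixes c :: "nat \<Rightarrow> real"
  assumes c: "summable (\<lambda>m. \<bar>c m\<bar>)"
  shows "summable (\<lambda>m. (c m)\<^sup>2)"
proof (rule summable_comparison_test[OF _ summable_mult[OF c, of "\<Sum>m. \<bar>c m\<bar>"]])
  have "\<bar>c n\<bar> \<le> (\<Sum>m. \<bar>c m\<bar>)" for n
    using sum_le_suminf[OF c, of "{n}"] by simp
  then have "\<bar>c n\<bar> * \<bar>c n\<bar> \<le> (\<Sum>m. \<bar>c m\<bar>) * \<bar>c n\<bar>" for n
    by (rule mult_right_mono) simp
  then show "\<exists>N. \<forall>n\<ge>N. norm ((c n)\<^sup>2) \<le> (\<Sum>m. \<bar>c m\<bar>) * \<bar>c n\<bar>"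
    by (simp add: power2_eq_square abs_mult)
qed

lemma parseval_abs_summable:
  fixes c :: "nat \<Rightarrow> real"
  assumes c: "summable (\<lambda>m. \<bar>c m\<bar>)"
  shows "((\<lambda>t. (cmod (\<Sum>m. complex_of_real (c m) * cis (- (real m * t))))\<^sup>2) has_integral
           (2 * pi * (\<Sum>m. (c m)\<^sup>2))) {-pi..pi}"
proof -
  define K where "K = (\<Sum>m. \<bar>c m\<bar>)"
  define f where "f N t = (cmod (\<Sum>m<N. complex_of_real (c m) * cis (- (real m * t))))\<^sup>2" for N t
  define F where "F t = (cmod (\<Sum>m. complex_of_real (c m) * cis (- (real m * t))))\<^sup>2" for t
  have norm_term: "norm (complex_of_real (c m) * cis (- (real m * t))) = \<bar>c m\<bar>" for m t
    by (simp add: norm_mult)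
  have f_int: "f N integrable_on {-pi..pi}" for N
    unfolding f_def using parseval_trig_sum by blast
  have f_le: "norm (f N t) \<le> K\<^sup>2" for N t
  proof -
    have "cmod (\<Sum>m<N. complex_of_real (c m) * cis (- (real m * t))) \<le> (\<Sum>m<N. \<bar>c m\<bar>)"
      by (rule order_trans[OF norm_sum]) (simp add: norm_term)
    also have "\<dots> \<le> K"
      unfolding K_def by (rule sum_le_suminf[OF c]) auto
    finally show ?thesis
      unfolding f_def by (simp add: power_mono)
  qed
  have f_lim: "(\<lambda>N. f N t) \<longlonglongrightarrow> F t" for t
  proof -
    have "summable (\<lambda>m. norm (complex_of_real (c m) * cis (- (real m * t))))"
      using c by (simp add: norm_term)
    then have "(\<lambda>N. \<Sum>m<N. complex_of_real (c m) * cis (- (real m * t)))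
        \<longlonglongrightarrow> (\<Sum>m. complex_of_real (c m) * cis (- (real m * t)))"
      by (rule summable_LIMSEQ[OF summable_norm_cancel])
    then show ?thesis
      unfolding f_def F_def by (intro tendsto_intros)
  qed
  note dominated = dominated_convergence[where h = "\<lambda>_. K\<^sup>2", OF f_int integrable_const_ivl f_le f_lim]
  have "(\<lambda>N. integral {-pi..pi} (f N)) = (\<lambda>N. 2 * pi * (\<Sum>m<N. (c m)\<^sup>2))"
    unfolding f_def by (rule ext) (rule integral_unique[OF parseval_trig_sum])
  with dominated(2) have "(\<lambda>N. 2 * pi * (\<Sum>m<N. (c m)\<^sup>2)) \<longlonglongrightarrow> integral {-pi..pi} F"
    by simp
  moreover have "(\<lambda>N. 2 * pi * (\<Sum>m<N. (c m)\<^sup>2)) \<longlonglongrightarrow> 2 * pi * (\<Sum>m. (c m)\<^sup>2)"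
    by (intro tendsto_intros summable_LIMSEQ abs_summable_imp_summable_power2[OF c])
  ultimately have "integral {-pi..pi} F = 2 * pi * (\<Sum>m. (c m)\<^sup>2)"
    by (rule LIMSEQ_unique)
  with integrable_integral[OF dominated(1)] have "(F has_integral 2 * pi * (\<Sum>m. (c m)\<^sup>2)) {-pi..pi}"
    by simp
  then show ?thesis
    unfolding F_def .
qed

lemma poly_reflect_ratio:
  fixes N D :: "complex poly"
  assumes "degree N \<le> degree D" and "w \<noteq> 0"
  shows "poly N (inverse w) / poly D (inverse w) =
         poly (monom 1 (degree D - degree N) * reflect_poly N) w / poly (reflect_poly D) w"
proof -
  have "poly (monom 1 (degree D - degree N) * reflect_poly N) w
      = w ^ (degree D - degree N) * (w ^ degree N * poly N (inverse w))"
    using assms(2) by (simp add: poly_monom poly_reflect_poly_nz)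
  also have "\<dots> = w ^ degree D * poly N (inverse w)"
    using assms(1) by (simp add: mult.assoc[symmetric] power_add[symmetric])
  finally have num: "poly (monom 1 (degree D - degree N) * reflect_poly N) w = w ^ degree D * poly N (inverse w)" .
  have den: "poly (reflect_poly D) w = w ^ degree D * poly D (inverse w)"
    using assms(2) by (simp add: poly_reflect_poly_nz)
  show ?thesis
    unfolding num den using assms(2) by simp
qed

lemma poly_nonzero_on_larger_ball:
  fixes q :: "complex poly"
  assumes "\<And>w. cmod w \<le> 1 \<Longrightarrow> poly q w \<noteq> 0"
  obtains \<rho> where "1 < \<rho>" and "\<And>w. cmod w < \<rho> \<Longrightarrow> poly q w \<noteq> 0"
proof (cases "{w. poly q w = 0} = {}")
  case True
  then show ?thesis using that[of 2] by auto
next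
  case False
  have "q \<noteq> 0"
    using assms[of 0] by auto
  then have fin: "finite {w. poly q w = 0}"
    by (rule poly_roots_finite)
  define \<rho> where "\<rho> = Min (norm ` {w. poly q w = 0})"
  have "\<rho> \<in> norm ` {w. poly q w = 0}"
    unfolding \<rho>_def using fin False by (intro Min_in) auto
  then obtain w0 where "poly q w0 = 0" and "\<rho> = cmod w0"
    by auto
  then have "1 < \<rho>"
    using assms[of w0] by force
  moreover have "poly q w \<noteq> 0" if "cmod w < \<rho>" for w
  proof
    assume "poly q w = 0"
    then have "\<rho> \<le> cmod w"
      unfolding \<rho>_def using fin by (intro Min_le) auto
    with that show False by simp
  qed
  ultimately show ?thesis
    using that by blast
qed

lemma stable_tf_reflected:
  assumes "stable_tf G"
  obtains f \<rho> X where "1 < \<rho>" and "f holomorphic_on ball 0 \<rho>" and "finite X"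
    and "\<And>z. z \<noteq> 0 \<Longrightarrow> z \<notin> X \<Longrightarrow> G z = f (inverse z)"
proof -
  obtain N D :: "complex poly" where D0: "D \<noteq> 0" and deg: "degree N \<le> degree D"
    and D_nz: "\<And>z. 1 \<le> cmod z \<Longrightarrow> poly D z \<noteq> 0" and fin: "finite {z. G z \<noteq> poly N z / poly D z}"
    using assms unfolding stable_tf_def by blast
  define Nr where "Nr = monom 1 (degree D - degree N) * reflect_poly N"
  have Dr_nz: "poly (reflect_poly D) w \<noteq> 0" if "cmod w \<le> 1" for w
  proof (cases "w = 0")
    case False
    then have "1 \<le> cmod (inverse w)"
      using that by (simp add: norm_inverse one_le_inverse_iff)
    then show ?thesis
      using D_nz False by (simp add: poly_reflect_poly_nz)
  qed (simp add: D0 poly_reflect_poly_0)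
  obtain \<rho> where "1 < \<rho>" and \<rho>: "\<And>w. cmod w < \<rho> \<Longrightarrow> poly (reflect_poly D) w \<noteq> 0"
    using poly_nonzero_on_larger_ball[OF Dr_nz] by blast
  moreover have "(\<lambda>w. poly Nr w / poly (reflect_poly D) w) holomorphic_on ball 0 \<rho>"
    using \<rho> by (intro holomorphic_intros) auto
  moreover have "G z = poly Nr (inverse z) / poly (reflect_poly D) (inverse z)"
    if "z \<noteq> 0" and "z \<notin> {z. G z \<noteq> poly N z / poly D z}" for z
    using that poly_reflect_ratio[OF deg, of "inverse z"] by (simp add: Nr_def)
  ultimately show ?thesis
    using that fin by blast
qed

lemma powser_eventually_zero_imp_coeff_zero:
  fixes d :: "nat \<Rightarrow> complex"
  assumes r: "0 < r" and sums: "\<And>x. norm x < r \<Longrightarrow> summable (\<lambda>n. d n * x ^ n)"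
    and zero: "eventually (\<lambda>x. (\<Sum>n. d n * x ^ n) = 0) (at 0)"
  shows "d m = 0"
proof -
  define f where "f x = (\<Sum>n. d n * x ^ n)" for x
  have f_sums: "norm x < r \<Longrightarrow> (\<lambda>n. d n * x ^ n) sums f x" for x
    unfolding f_def using sums by (simp add: summable_sums)
  have "(f \<longlongrightarrow> d 0) (at 0)"
    by (rule powser_limit_0[OF r f_sums])
  moreover have "(f \<longlongrightarrow> 0) (at 0)"
    using zero unfolding f_def by (rule tendsto_eventually)
  ultimately have d0: "d 0 = 0"
    by (rule tendsto_unique[rotated]) simp
  show ?thesis
  proof (rule ccontr)
    assume "d m \<noteq> 0"
    moreover have "0 < m"
      using d0 \<open>d m \<noteq> 0\<close> by (cases m) auto
    moreover have "f 0 = 0"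
      using d0 by (simp add: f_def)
    ultimately obtain s where "0 < s" and nz: "\<And>w. w \<in> cball 0 s - {0} \<Longrightarrow> f w \<noteq> 0"
      using powser_0_nonzero[where r = r and a = d and \<xi> = 0 and f = f and m = m] r f_sums by auto
    have "eventually (\<lambda>x. x \<in> ball 0 s) (at (0::complex))"
      using \<open>0 < s\<close> by (intro eventually_at_in_open') auto
    with zero eventually_neq_at_within[of 0 0 UNIV]
    have "eventually (\<lambda>x. x \<in> ball 0 s \<and> x \<noteq> 0 \<and> f x = 0) (at (0::complex))"
      unfolding f_def by eventually_elim auto
    then obtain x where "x \<in> ball 0 s" "x \<noteq> 0" "f x = 0"
      using eventually_happens'[OF at_neq_bot] by blast
    then show False
      using nz[of x] by auto
  qed
qed

lemma eventually_not_in_finite_at: "finite X \<Longrightarrow> eventually (\<lambda>x. x \<notin> X) (at a)"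
  for a :: "'a::t1_space"
  using islimpt_finite[of X a] by (simp add: islimpt_iff_eventually)

lemma impulse_response_powser:
  assumes "impulse_response F g"
  obtains r where "0 < r"
    and "\<And>w. w \<noteq> 0 \<Longrightarrow> cmod w < r \<Longrightarrow> (\<lambda>n. complex_of_real (g n) * w ^ n) sums F (inverse w)"
proof -
  obtain R0 where R0: "\<And>z. R0 < cmod z \<Longrightarrow> (\<lambda>j. complex_of_real (g j) * inverse z ^ j) sums F z"
    using assms unfolding impulse_response_def by blast
  have "(\<lambda>n. complex_of_real (g n) * w ^ n) sums F (inverse w)"
    if "w \<noteq> 0" and "cmod w < inverse (max R0 1)" for w
  proof -
    have "inverse (inverse (max R0 1)) < inverse (cmod w)"
      using that by (intro less_imp_inverse_less) auto
    then have "R0 < cmod (inverse w)"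
      by (simp add: norm_inverse)
    from R0[OF this] show ?thesis
      by simp
  qed
  then show ?thesis
    using that[of "inverse (max R0 1)"] by simp
qed

text \<open>In \<open>w = 1/z\<close> the impulse response is the Taylor series at \<open>0\<close> of the reflected transfer
  function: both series agree near \<open>0\<close> up to finitely many points.\<close>

lemma impulse_response_taylor_coeff:
  assumes ir: "impulse_response G g" and hol: "f holomorphic_on ball 0 \<rho>" and "0 < \<rho>"
    and fin: "finite X" and eq: "\<And>z. z \<noteq> 0 \<Longrightarrow> z \<notin> X \<Longrightarrow> G z = f (inverse z)"
  shows "complex_of_real (g n) = (deriv ^^ n) f 0 / fact n"
proof -
  define b where "b n = (deriv ^^ n) f 0 / fact n" for n
  obtain r0 where "0 < r0" and g_sums0:
    "\<And>x. x \<noteq> 0 \<Longrightarrow> cmod x < r0 \<Longrightarrow> (\<lambda>n. complex_of_real (g n) * x ^ n) sums G (inverse x)"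
    using impulse_response_powser[OF ir] by blast
  define r where "r = min r0 \<rho>"
  have "0 < r"
    using \<open>0 < r0\<close> \<open>0 < \<rho>\<close> by (simp add: r_def)
  have g_sums: "(\<lambda>n. complex_of_real (g n) * x ^ n) sums G (inverse x)" if "x \<noteq> 0" "cmod x < r" for x
    using g_sums0 that by (simp add: r_def)
  have b_sums: "(\<lambda>n. b n * x ^ n) sums f x" if "cmod x < r" for x
    using holomorphic_power_series[OF hol, of x] that by (simp add: b_def r_def)
  define d where "d n = complex_of_real (g n) - b n" for n
  have d_sums: "(\<lambda>n. d n * x ^ n) sums (G (inverse x) - f x)" if "x \<noteq> 0" "cmod x < r" for x
    using sums_diff[OF g_sums[OF that] b_sums[OF that(2)]] by (simp add: d_def algebra_simps)
  have "d n = 0"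
  proof (rule powser_eventually_zero_imp_coeff_zero[OF \<open>0 < r\<close>])
    show "summable (\<lambda>n. d n * x ^ n)" if "cmod x < r" for x
      using d_sums[OF _ that] by (cases "x = 0") (auto simp: sums_summable)
    have "eventually (\<lambda>x. x \<in> ball 0 r) (at (0::complex))"
      using \<open>0 < r\<close> by (intro eventually_at_in_open') auto
    moreover have "eventually (\<lambda>x. x \<notin> inverse ` X) (at (0::complex))"
      using fin by (intro eventually_not_in_finite_at) simp
    ultimately have "eventually (\<lambda>x. x \<in> ball 0 r \<and> x \<notin> inverse ` X \<and> x \<noteq> 0) (at (0::complex))"
      using eventually_neq_at_within[of 0 0 UNIV] by eventually_elim simp
    then
    show "eventually (\<lambda>x. (\<Sum>n. d n * x ^ n) = 0) (at 0)"
    proof (rule eventually_mono)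
      fix x assume x: "x \<in> ball 0 r \<and> x \<notin> inverse ` X \<and> x \<noteq> 0"
      then have "inverse x \<notin> X"
        using image_eqI[of x inverse "inverse x" X] by auto
      with x show "(\<Sum>n. d n * x ^ n) = 0"
        using d_sums[of x] eq[of "inverse x"] by (simp add: sums_iff)
    qed
  qed
  then show ?thesis
    by (simp add: d_def b_def)
qed

lemma finite_cis_preimage:
  assumes "finite X"
  shows "finite {\<theta>\<in>{-pi..pi}. cis \<theta> \<in> X}"
proof (rule finite_subset)
  show "{\<theta>\<in>{-pi..pi}. cis \<theta> \<in> X} \<subseteq> insert (-pi) (Arg ` X)"
  proof
    fix \<theta> assume \<theta>: "\<theta> \<in> {\<theta>\<in>{-pi..pi}. cis \<theta> \<in> X}"
    show "\<theta> \<in> insert (-pi) (Arg ` X)"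
    proof (cases "\<theta> = -pi")
      case False
      with \<theta> have "Arg (cis \<theta>) = \<theta>"
        by (intro cis_Arg_unique) (auto simp: sgn_div_norm)
      with \<theta> show ?thesis
        by force
    qed simp
  qed
qed (use assms in simp)

lemma stable_tf_impulse_response:
  assumes "stable_tf G" and "impulse_response G g"
  shows "summable (\<lambda>j. \<bar>g j\<bar>)"
    and "\<exists>E. finite E \<and> (\<forall>\<theta>\<in>{-pi..pi} - E.
           (\<lambda>j. complex_of_real (g j) * cis (- (real j * \<theta>))) sums G (cis \<theta>))"
proof -
  obtain \<rho> f X where "1 < \<rho>" and hol: "f holomorphic_on ball 0 \<rho>" and fin: "finite X"
    and eq: "\<And>z. z \<noteq> 0 \<Longrightarrow> z \<notin> X \<Longrightarrow> G z = f (inverse z)"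
    by (rule stable_tf_reflected[OF assms(1)]) blast
  have coeff: "complex_of_real (g n) = (deriv ^^ n) f 0 / fact n" for n
    by (rule impulse_response_taylor_coeff[OF assms(2) hol _ fin eq]) (use \<open>1 < \<rho>\<close> in simp)
  have g_sums: "(\<lambda>n. complex_of_real (g n) * w ^ n) sums f w" if "cmod w < \<rho>" for w
    using holomorphic_power_series[OF hol, of w] that by (simp add: coeff)
  define \<rho>' where "\<rho>' = (1 + \<rho>) / 2"
  have "1 < \<rho>'" and "\<rho>' < \<rho>"
    using \<open>1 < \<rho>\<close> by (simp_all add: \<rho>'_def)
  then have "summable (\<lambda>n. complex_of_real (g n) * complex_of_real \<rho>' ^ n)"
    using g_sums[of "complex_of_real \<rho>'"] by (simp add: sums_summable)
  then have "summable (\<lambda>n. norm (complex_of_real (g n) * 1 ^ n))"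
    by (rule powser_insidea) (use \<open>1 < \<rho>'\<close> in simp)
  then show "summable (\<lambda>j. \<bar>g j\<bar>)"
    by simp
  show "\<exists>E. finite E \<and> (\<forall>\<theta>\<in>{-pi..pi} - E.
      (\<lambda>j. complex_of_real (g j) * cis (- (real j * \<theta>))) sums G (cis \<theta>))"
  proof (intro exI conjI ballI)
    show "finite {\<theta>\<in>{-pi..pi}. cis \<theta> \<in> X}"
      by (rule finite_cis_preimage[OF fin])
    fix \<theta> assume "\<theta> \<in> {-pi..pi} - {\<theta>\<in>{-pi..pi}. cis \<theta> \<in> X}"
    then have "G (cis \<theta>) = f (cis (-\<theta>))"
      using eq[of "cis \<theta>"] by (simp add: cis_inverse)
    moreover have "cis (-\<theta>) ^ n = cis (- (real n * \<theta>))" for n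
      by (induction n) (simp_all add: cis_mult algebra_simps)
    ultimately show "(\<lambda>j. complex_of_real (g j) * cis (- (real j * \<theta>))) sums G (cis \<theta>)"
      using g_sums[of "cis (-\<theta>)"] \<open>1 < \<rho>\<close> by simp
  qed
qed

lemma impulse_response_tendsto_0:
  assumes "impulse_response F g"
  shows "((\<lambda>w. F (inverse w)) \<longlongrightarrow> complex_of_real (g 0)) (at 0)"
proof -
  obtain r where "0 < r"
    and "\<And>w. w \<noteq> 0 \<Longrightarrow> cmod w < r \<Longrightarrow> (\<lambda>n. complex_of_real (g n) * w ^ n) sums F (inverse w)"
    using impulse_response_powser[OF assms] by blast
  then show ?thesis
    by (intro powser_limit_0_strong[where s = r]) simp_all
qed

lemma tf_inverse_tendsto:
  fixes b a :: "real poly"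
  assumes "a \<noteq> 0" and "degree b \<le> degree a"
  obtains L where "((\<lambda>w. tf b a (inverse w)) \<longlongrightarrow> L) (at 0)" and "degree b < degree a \<Longrightarrow> L = 0"
proof -
  define b' where "b' = map_poly complex_of_real b"
  define a' where "a' = map_poly complex_of_real a"
  have deg: "degree b' = degree b" "degree a' = degree a"
    by (simp_all add: b'_def a'_def degree_map_poly)
  have "a' \<noteq> 0"
    using assms(1) by (simp add: a'_def map_poly_eq_0_iff)
  define \<psi> where "\<psi> w = poly (monom 1 (degree a' - degree b') * reflect_poly b') w / poly (reflect_poly a') w"
    for w
  have "isCont \<psi> 0"
    unfolding \<psi>_def using \<open>a' \<noteq> 0\<close> by (intro continuous_intros) (simp add: poly_reflect_poly_0)
  moreover have "eventually (\<lambda>w. \<psi> w = tf b a (inverse w)) (at 0)"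
    using eventually_neq_at_within[of 0 0 UNIV]
  proof (rule eventually_mono)
    fix w :: complex assume "w \<noteq> 0"
    then show "\<psi> w = tf b a (inverse w)"
      unfolding tf_def \<psi>_def b'_def[symmetric] a'_def[symmetric]
      using assms(2) deg by (subst poly_reflect_ratio) simp_all
  qed
  ultimately have "((\<lambda>w. tf b a (inverse w)) \<longlongrightarrow> \<psi> 0) (at 0)"
    by (simp add: isCont_def tendsto_cong)
  moreover have "\<psi> 0 = 0" if "degree b < degree a"
    using that deg by (simp add: \<psi>_def poly_monom)
  ultimately show ?thesis
    using that by blast
qed

lemma nominal_inverse_tendsto_0:
  assumes "aP \<noteq> 0" "degree bP < degree aP" and "aK \<noteq> 0" "degree bK \<le> degree aK"
  shows "((\<lambda>w. nominal (tf bP aP) (tf bK aK) (mean_channel tmax \<alpha> p) (inverse w)) \<longlongrightarrow> 0) (at 0)"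
proof -
  have LP: "((\<lambda>w. tf bP aP (inverse w)) \<longlongrightarrow> 0) (at 0)"
    by (rule tf_inverse_tendsto[OF assms(1) less_imp_le[OF assms(2)]]) (use assms(2) in auto)
  obtain LK where LK: "((\<lambda>w. tf bK aK (inverse w)) \<longlongrightarrow> LK) (at 0)"
    using tf_inverse_tendsto[OF assms(3,4)] by blast
  have "mean_channel tmax \<alpha> p (inverse w) = (\<Sum>i\<le>tmax. complex_of_real (\<alpha> i * p i) * w ^ i)" for w
    by (simp add: mean_channel_def)
  moreover have "((\<lambda>w. \<Sum>i\<le>tmax. complex_of_real (\<alpha> i * p i) * w ^ i)
      \<longlongrightarrow> (\<Sum>i\<le>tmax. complex_of_real (\<alpha> i * p i) * 0 ^ i)) (at 0)"
    by (intro tendsto_intros)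
  ultimately have "((\<lambda>w. mean_channel tmax \<alpha> p (inverse w))
      \<longlongrightarrow> (\<Sum>i\<le>tmax. complex_of_real (\<alpha> i * p i) * 0 ^ i)) (at 0)"
    by simp
  with LP LK show ?thesis
    unfolding nominal_def by (auto intro!: tendsto_eq_intros)
qed

lemma strictly_proper_impulse_response_0:
  assumes "aP \<noteq> 0" "degree bP < degree aP" and "aK \<noteq> 0" "degree bK \<le> degree aK"
    and "impulse_response (nominal (tf bP aP) (tf bK aK) (mean_channel tmax \<alpha> p)) g"
  shows "g 0 = 0"
  using tendsto_unique[OF _ impulse_response_tendsto_0[OF assms(5)] nominal_inverse_tendsto_0[OF assms(1-4)]]
  by simp

section \<open>The \<open>H\<^sub>2\<close> norm of \<open>\<Phi>G\<close>\<close>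

lemma summable_abs_gz_delay:
  assumes "summable (\<lambda>j. \<bar>g j\<bar>)"
  shows "summable (\<lambda>m. \<bar>gz g (int m - int i)\<bar>)"
proof -
  have "summable (\<lambda>m. \<bar>gz g (int (m + i) - int i)\<bar>)"
    using assms by (simp add: gz_def)
  then show ?thesis
    by (rule summable_iff_shift[THEN iffD1])
qed

lemma sums_gz_delay:
  assumes "(\<lambda>j. complex_of_real (g j) * cis (- (real j * t))) sums S"
  shows "(\<lambda>m. complex_of_real (gz g (int m - int i)) * cis (- (real m * t))) sums (cis (- (real i * t)) * S)"
proof -
  define f where "f m = complex_of_real (gz g (int m - int i)) * cis (- (real m * t))" for m
  have "f (j + i) = cis (- (real i * t)) * (complex_of_real (g j) * cis (- (real j * t)))" for j
    by (simp add: f_def gz_def cis_mult algebra_simps)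
  then have "(\<lambda>j. f (j + i)) sums (cis (- (real i * t)) * S)"
    using sums_mult[OF assms] by simp
  moreover have "(\<Sum>m<i. f m) = 0"
    by (simp add: f_def gz_def)
  ultimately show ?thesis
    unfolding f_def[symmetric] by (simp add: sums_iff_shift)
qed

definition delay_diff :: "(nat \<Rightarrow> real) \<Rightarrow> (nat \<Rightarrow> real) \<Rightarrow> nat \<Rightarrow> nat \<Rightarrow> nat \<Rightarrow> real" where
  "delay_diff \<alpha> g i1 i2 m = gz g (int m - int i1) * \<alpha> i1 - gz g (int m - int i2) * \<alpha> i2"

lemma abs_summable_delay_diff:
  assumes "summable (\<lambda>j. \<bar>g j\<bar>)"
  shows "summable (\<lambda>m. \<bar>delay_diff \<alpha> g i1 i2 m\<bar>)"
proof (rule summable_comparison_test)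
  show "summable (\<lambda>m. \<bar>gz g (int m - int i1)\<bar> * \<bar>\<alpha> i1\<bar> + \<bar>gz g (int m - int i2)\<bar> * \<bar>\<alpha> i2\<bar>)"
    using assms by (intro summable_add summable_mult2 summable_abs_gz_delay)
  show "\<exists>N. \<forall>m\<ge>N. norm \<bar>delay_diff \<alpha> g i1 i2 m\<bar>
      \<le> \<bar>gz g (int m - int i1)\<bar> * \<bar>\<alpha> i1\<bar> + \<bar>gz g (int m - int i2)\<bar> * \<bar>\<alpha> i2\<bar>"
    by (auto simp: delay_diff_def abs_mult[symmetric] intro!: abs_triangle_ineq4)
qed

lemma sums_delay_diff_fourier:
  assumes "(\<lambda>j. complex_of_real (g j) * cis (- (real j * \<theta>))) sums S"
  shows "(\<lambda>m. complex_of_real (delay_diff \<alpha> g i1 i2 m) * cis (- (real m * \<theta>)))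
           sums ((of_real (\<alpha> i1) * cis (-\<theta>) ^ i1 - of_real (\<alpha> i2) * cis (-\<theta>) ^ i2) * S)"
proof -
  have "cis (-\<theta>) ^ i = cis (- (real i * \<theta>))" for i
    by (induction i) (simp_all add: cis_mult algebra_simps)
  moreover have "(\<lambda>m. of_real (\<alpha> i1) * (complex_of_real (gz g (int m - int i1)) * cis (- (real m * \<theta>)))
      - of_real (\<alpha> i2) * (complex_of_real (gz g (int m - int i2)) * cis (- (real m * \<theta>))))
    sums (of_real (\<alpha> i1) * (cis (- (real i1 * \<theta>)) * S) - of_real (\<alpha> i2) * (cis (- (real i2 * \<theta>)) * S))"
    by (intro sums_diff sums_mult sums_gz_delay assms)
  ultimately show ?thesis
    by (simp add: delay_diff_def algebra_simps)
qed

lemma That_sums_delay_diff: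
  assumes "summable (\<lambda>j. \<bar>g j\<bar>)"
  shows "That tmax \<alpha> p g sums
           (1/2 * (\<Sum>i1\<le>tmax. \<Sum>i2\<le>tmax. (\<Sum>m. (delay_diff \<alpha> g i1 i2 m)\<^sup>2) * (p i1 * p i2)))"
proof -
  have "That tmax \<alpha> p g
      = (\<lambda>m. 1/2 * (\<Sum>i1\<le>tmax. \<Sum>i2\<le>tmax. (delay_diff \<alpha> g i1 i2 m)\<^sup>2 * (p i1 * p i2)))"
    by (simp add: fun_eq_iff That_def delay_diff_def mult.assoc)
  moreover have "(\<lambda>m. 1/2 * (\<Sum>i1\<le>tmax. \<Sum>i2\<le>tmax. (delay_diff \<alpha> g i1 i2 m)\<^sup>2 * (p i1 * p i2)))
      sums (1/2 * (\<Sum>i1\<le>tmax. \<Sum>i2\<le>tmax. (\<Sum>m. (delay_diff \<alpha> g i1 i2 m)\<^sup>2) * (p i1 * p i2)))"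
    using assms
    by (intro sums_mult sums_sum sums_mult2 summable_sums abs_summable_imp_summable_power2
        abs_summable_delay_diff)
  ultimately show ?thesis
    by (simp only:)
qed

lemma cmod_sq_spectral_factor:
  fixes \<phi> :: "real poly" and \<alpha> p :: "nat \<Rightarrow> real"
  assumes Phi_spec: "\<forall>z::complex. z \<noteq> 0 \<longrightarrow>
        poly (map_poly complex_of_real \<phi>) z * poly (map_poly complex_of_real \<phi>) (inverse z) =
        1/2 * (\<Sum>i1\<le>tmax. \<Sum>i2\<le>tmax.
           (of_real (\<alpha> i1) * z ^ i1 - of_real (\<alpha> i2) * z ^ i2) *
           (of_real (\<alpha> i1) * inverse z ^ i1 - of_real (\<alpha> i2) * inverse z ^ i2) *
           of_real (p i1 * p i2))"
  shows "(cmod (poly (map_poly complex_of_real \<phi>) (cis t)))\<^sup>2 = 1/2 * (\<Sum>i1\<le>tmax. \<Sum>i2\<le>tmax.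
           (cmod (of_real (\<alpha> i1) * cis t ^ i1 - of_real (\<alpha> i2) * cis t ^ i2))\<^sup>2 * (p i1 * p i2))"
proof -
  let ?P = "poly (map_poly complex_of_real \<phi>)"
  define z where "z = cis t"
  have z0: "z \<noteq> 0" and inv_z: "inverse z = cnj z"
    by (simp_all add: z_def cis_cnj cis_inverse)
  have "complex_of_real ((cmod (?P z))\<^sup>2) = ?P z * cnj (?P z)"
    by (rule complex_norm_square)
  also have "\<dots> = ?P z * ?P (inverse z)"
    by (simp add: poly_cnj_real coeff_map_poly inv_z)
  also have "\<dots> = 1/2 * (\<Sum>i1\<le>tmax. \<Sum>i2\<le>tmax.
           (of_real (\<alpha> i1) * z ^ i1 - of_real (\<alpha> i2) * z ^ i2) *
           (of_real (\<alpha> i1) * inverse z ^ i1 - of_real (\<alpha> i2) * inverse z ^ i2) * of_real (p i1 * p i2))"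
    using Phi_spec z0 by blast
  also have "\<dots> = complex_of_real (1/2 * (\<Sum>i1\<le>tmax. \<Sum>i2\<le>tmax.
      (cmod (of_real (\<alpha> i1) * z ^ i1 - of_real (\<alpha> i2) * z ^ i2))\<^sup>2 * (p i1 * p i2)))"
  proof -
    have "(of_real (\<alpha> i1) * z ^ i1 - of_real (\<alpha> i2) * z ^ i2) *
        (of_real (\<alpha> i1) * inverse z ^ i1 - of_real (\<alpha> i2) * inverse z ^ i2)
        = complex_of_real ((cmod (of_real (\<alpha> i1) * z ^ i1 - of_real (\<alpha> i2) * z ^ i2))\<^sup>2)" for i1 i2
      unfolding complex_norm_square inv_z by simp
    then show ?thesis
      by simp
  qed
  finally show ?thesis
    unfolding z_def of_real_eq_iff .
qed

lemma cmod_sq_spectral_factor_mult_fourier: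
  fixes \<phi> :: "real poly" and \<alpha> p g :: "nat \<Rightarrow> real"
  assumes Phi_spec: "\<forall>z::complex. z \<noteq> 0 \<longrightarrow>
        poly (map_poly complex_of_real \<phi>) z * poly (map_poly complex_of_real \<phi>) (inverse z) =
        1/2 * (\<Sum>i1\<le>tmax. \<Sum>i2\<le>tmax.
           (of_real (\<alpha> i1) * z ^ i1 - of_real (\<alpha> i2) * z ^ i2) *
           (of_real (\<alpha> i1) * inverse z ^ i1 - of_real (\<alpha> i2) * inverse z ^ i2) *
           of_real (p i1 * p i2))"
    and G: "(\<lambda>j. complex_of_real (g j) * cis (- (real j * \<theta>))) sums G (cis \<theta>)"
  shows "(cmod (poly (map_poly complex_of_real \<phi>) (inverse (cis \<theta>)) * G (cis \<theta>)))\<^sup>2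
       = 1/2 * (\<Sum>i1\<le>tmax. \<Sum>i2\<le>tmax.
           (cmod (\<Sum>m. complex_of_real (delay_diff \<alpha> g i1 i2 m) * cis (- (real m * \<theta>))))\<^sup>2 * (p i1 * p i2))"
proof -
  let ?P = "poly (map_poly complex_of_real \<phi>)"
  let ?D = "\<lambda>i1 i2. of_real (\<alpha> i1) * cis (-\<theta>) ^ i1 - of_real (\<alpha> i2) * cis (-\<theta>) ^ i2"
  have "(cmod (?P (inverse (cis \<theta>)) * G (cis \<theta>)))\<^sup>2 = (cmod (?P (cis (-\<theta>))))\<^sup>2 * (cmod (G (cis \<theta>)))\<^sup>2"
    by (simp add: cis_inverse norm_mult power_mult_distrib)
  also have "\<dots> = 1/2 * (\<Sum>i1\<le>tmax. \<Sum>i2\<le>tmax. (cmod (?D i1 i2))\<^sup>2 * (p i1 * p i2)) * (cmod (G (cis \<theta>)))\<^sup>2"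
    by (simp only: cmod_sq_spectral_factor[OF Phi_spec])
  also have "\<dots> = 1/2 * (\<Sum>i1\<le>tmax. \<Sum>i2\<le>tmax. (cmod (?D i1 i2 * G (cis \<theta>)))\<^sup>2 * (p i1 * p i2))"
    by (simp add: sum_distrib_right sum_distrib_left norm_mult power_mult_distrib mult_ac)
  also have "\<dots> = 1/2 * (\<Sum>i1\<le>tmax. \<Sum>i2\<le>tmax.
      (cmod (\<Sum>m. complex_of_real (delay_diff \<alpha> g i1 i2 m) * cis (- (real m * \<theta>))))\<^sup>2 * (p i1 * p i2))"
    using sums_delay_diff_fourier[OF G] by (simp add: sums_iff)
  finally show ?thesis .
qed

text \<open>By the defining identity of \<open>\<Phi>\<close>, \<open>|\<Phi> G|\<^sup>2\<close> on the unit circle is a \<open>p\<close>-weighted sum of the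
  \<open>|D\<^sub>i\<^sub>1\<^sub>i\<^sub>2|\<^sup>2\<close>, where \<open>D\<^sub>i\<^sub>1\<^sub>i\<^sub>2\<close> is the transform of \<open>delay_diff \<alpha> g i1 i2\<close>; Parseval's identity
  then integrates each term to the corresponding sum of squares in \<open>That\<close>.\<close>

lemma That_sums_h2norm_sq:
  fixes \<phi> :: "real poly" and \<alpha> p g :: "nat \<Rightarrow> real" and G :: "complex \<Rightarrow> complex"
  assumes st: "stable_tf G" and ir: "impulse_response G g" and Phi_spec: "\<forall>z::complex. z \<noteq> 0 \<longrightarrow>
        poly (map_poly complex_of_real \<phi>) z * poly (map_poly complex_of_real \<phi>) (inverse z) =
        1/2 * (\<Sum>i1\<le>tmax. \<Sum>i2\<le>tmax.
           (of_real (\<alpha> i1) * z ^ i1 - of_real (\<alpha> i2) * z ^ i2) *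
           (of_real (\<alpha> i1) * inverse z ^ i1 - of_real (\<alpha> i2) * inverse z ^ i2) *
           of_real (p i1 * p i2))"
  shows "That tmax \<alpha> p g sums (h2norm (\<lambda>z. poly (map_poly complex_of_real \<phi>) (inverse z) * G z))\<^sup>2"
proof -
  let ?F = "\<lambda>\<theta>. (cmod (poly (map_poly complex_of_real \<phi>) (inverse (cis \<theta>)) * G (cis \<theta>)))\<^sup>2"
  define S where "S = 1/2 * (\<Sum>i1\<le>tmax. \<Sum>i2\<le>tmax. (\<Sum>m. (delay_diff \<alpha> g i1 i2 m)\<^sup>2) * (p i1 * p i2))"
  have g_abs: "summable (\<lambda>j. \<bar>g j\<bar>)"
    by (rule stable_tf_impulse_response(1)[OF st ir])
  obtain E where "finite E" and fourier: "\<And>\<theta>. \<theta> \<in> {-pi..pi} - E \<Longrightarrow>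
      (\<lambda>j. complex_of_real (g j) * cis (- (real j * \<theta>))) sums G (cis \<theta>)"
    using stable_tf_impulse_response(2)[OF st ir] by blast
  have "((\<lambda>\<theta>. 1/2 * (\<Sum>i1\<le>tmax. \<Sum>i2\<le>tmax.
      (cmod (\<Sum>m. complex_of_real (delay_diff \<alpha> g i1 i2 m) * cis (- (real m * \<theta>))))\<^sup>2 * (p i1 * p i2)))
    has_integral (1/2 * (\<Sum>i1\<le>tmax. \<Sum>i2\<le>tmax. (2 * pi * (\<Sum>m. (delay_diff \<alpha> g i1 i2 m)\<^sup>2)) * (p i1 * p i2))))
    {-pi..pi}"
    by (intro has_integral_mult_right has_integral_sum finite_atMost has_integral_mult_left
        parseval_abs_summable[OF abs_summable_delay_diff[OF g_abs]])
  also have "1/2 * (\<Sum>i1\<le>tmax. \<Sum>i2\<le>tmax. (2 * pi * (\<Sum>m. (delay_diff \<alpha> g i1 i2 m)\<^sup>2)) * (p i1 * p i2))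
      = 2 * pi * S"
    unfolding S_def by (simp add: sum_distrib_left mult_ac)
  finally have sum_int: "((\<lambda>\<theta>. 1/2 * (\<Sum>i1\<le>tmax. \<Sum>i2\<le>tmax.
      (cmod (\<Sum>m. complex_of_real (delay_diff \<alpha> g i1 i2 m) * cis (- (real m * \<theta>))))\<^sup>2 * (p i1 * p i2)))
    has_integral (2 * pi * S)) {-pi..pi}" .
  have pointwise: "?F \<theta> = 1/2 * (\<Sum>i1\<le>tmax. \<Sum>i2\<le>tmax.
      (cmod (\<Sum>m. complex_of_real (delay_diff \<alpha> g i1 i2 m) * cis (- (real m * \<theta>))))\<^sup>2 * (p i1 * p i2))"
    if "\<theta> \<in> {-pi..pi} - E" for \<theta>
    by (rule cmod_sq_spectral_factor_mult_fourier[where G = G and \<theta> = \<theta>, OF Phi_spec fourier[OF that]])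
  have F_int: "(?F has_integral (2 * pi * S)) {-pi..pi}"
    by (rule has_integral_spike_finite[OF \<open>finite E\<close> pointwise sum_int])
  have "0 \<le> 2 * pi * S"
    by (rule has_integral_nonneg[OF F_int]) simp
  then have "0 \<le> S"
    using pi_gt_zero by (simp add: zero_le_mult_iff)
  then have "(h2norm (\<lambda>z. poly (map_poly complex_of_real \<phi>) (inverse z) * G z))\<^sup>2 = S"
    unfolding h2norm_def integral_unique[OF F_int] by simp
  with That_sums_delay_diff[OF g_abs, of tmax \<alpha> p] show ?thesis
    by (simp only: S_def)
qed

theorem lemma10:
  fixes tmax :: nat
    and \<alpha> p :: "nat \<Rightarrow> real"
    and bP aP bK aK :: "real poly"
    and g :: "nat \<Rightarrow> real"
    and \<phi> :: "real poly"
  assumes p_nonneg: "\<forall>i\<le>tmax. 0 \<le> p i"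
    and p_sum: "(\<Sum>i\<le>tmax. p i) = 1"
    and P_proper: "aP \<noteq> 0" "degree bP < degree aP"
    and K_proper: "aK \<noteq> 0" "degree bK \<le> degree aK"
    and g_imp: "impulse_response
                  (nominal (tf bP aP) (tf bK aK) (mean_channel tmax \<alpha> p)) g"
    and Phi_deg: "degree \<phi> = tmax"
    and Phi_minphase: "\<forall>w. poly (map_poly complex_of_real \<phi>) w = 0 \<longrightarrow> 1 < cmod w"
    and Phi_spec: "\<forall>z::complex. z \<noteq> 0 \<longrightarrow>
        poly (map_poly complex_of_real \<phi>) z * poly (map_poly complex_of_real \<phi>) (inverse z) =
        1/2 * (\<Sum>i1\<le>tmax. \<Sum>i2\<le>tmax.
           (of_real (\<alpha> i1) * z ^ i1 - of_real (\<alpha> i2) * z ^ i2) *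
           (of_real (\<alpha> i1) * inverse z ^ i1 - of_real (\<alpha> i2) * inverse z ^ i2) *
           of_real (p i1 * p i2))"
    and stable: "ms_stable tmax \<alpha> p
                   (nominal (tf bP aP) (tf bK aK) (mean_channel tmax \<alpha> p)) g"
  shows "(Shat tmax \<alpha> p g) sums
           (1 / (1 - (h2norm (\<lambda>z. poly (map_poly complex_of_real \<phi>) (inverse z) *
               nominal (tf bP aP) (tf bK aK) (mean_channel tmax \<alpha> p) z))\<^sup>2))
       \<and> h2norm (\<lambda>z. poly (map_poly complex_of_real \<phi>) (inverse z) *
               nominal (tf bP aP) (tf bK aK) (mean_channel tmax \<alpha> p) z) < 1"
proof -
  define G where "G = nominal (tf bP aP) (tf bK aK) (mean_channel tmax \<alpha> p)"
  define h where "h = h2norm (\<lambda>z. poly (map_poly complex_of_real \<phi>) (inverse z) * G z)"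
  have "g 0 = 0"
    using strictly_proper_impulse_response_0[OF P_proper K_proper g_imp] .
  then interpret closed_loop tmax p \<alpha> g
    using p_nonneg p_sum by unfold_locales
  \<comment> \<open>Only \<open>|\<Phi>|\<close> on the unit circle matters.\<close>
  have That_sums: "That tmax \<alpha> p g sums h\<^sup>2"
    unfolding h_def G_def
    using stable g_imp Phi_spec by (intro That_sums_h2norm_sq) (simp_all add: ms_stable_def)
  then have "h\<^sup>2 < 1"
    using stable by (rule ms_stable_imp_That_sum_less_1[rotated])
  moreover have "Shat tmax \<alpha> p g sums (1 / (1 - h\<^sup>2))"
    by (rule renewal_sequence_sums[OF _ _ That_nonneg That_0 That_sums \<open>h\<^sup>2 < 1\<close>])
      (subst Shat.simps; simp)+
  ultimately show ?thesis
    unfolding h_def[symmetric] G_def[symmetric] by (simp add: abs_square_less_1)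
qed

end
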